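(* There exists a universal constant $C$ such that for all functions $f:\mathcal{S}\to\mathcal{Z}$ with $\mathcal{S}\subseteq\mathcal{X}\times\mathcal{Y}$ and all $\varepsilon,\delta\in(0,\tfrac12)$, $$\mathrm{IC}_D(f,\varepsilon)\ge\frac{\delta^2}{C}\Big[\log_2\overline{\mathrm{prt}}_{\varepsilon+3\delta}(f)-\log_2|\mathcal{Z}|\Big]-\delta .$$
   Context: $\mathcal{X},\mathcal{Y},\mathcal{Z}$ finite, $\mathcal{S}\subseteq\mathcal{X}\times\mathcal{Y}$ valid inputs, $f:\mathcal{S}\to\mathcal{Z}$; rectangles are sets $A\times B$, $A\subseteq\mathcal{X},B\subseteq\mathcal{Y}$ (empty one included). Protocols are two-party randomized (public and private coins); the transcript $\Pi$ contains messages, public coins and output. $\mathrm{err}_f(\pi;x,y)=\Pr[\pi(x,y)\ne f(x,y)]$ on $\mathcal{S}$ and $0$ off $\mathcal{S}$; $\mathrm{err}_f(\pi;\mu)=\mathbb{E}_{(X,Y)\sim\mu}\mathrm{err}_f(\pi;X,Y)$. $\mathrm{IC}_\mu(\pi)=I(X;\Pi\mid Y)+I(Y;\Pi\mid X)$ for $(X,Y)\sim\mu$; $\mathrm{IC}_\mu(f,\varepsilon)=\inf_{\pi:\mathrm{err}_f(\pi;\mu)\le\varepsilon}\mathrm{IC}_\mu(\pi)$; $\mathrm{IC}_D(f,\varepsilon)=\max_\mu\mathrm{IC}_\mu(f,\varepsilon)$. $\overline{\mathrm{prt}}^\mu_\varepsilon(f)$ is the value of: minimize $1/\eta$ over $\eta>0$,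 $p_{R,z}\ge0$ (all rectangles $R$, $z\in\mathcal{Z}$) s.t. (i) $\sum_{(x,y)\in\mathcal{S}}\mu(x,y)\sum_{R\ni(x,y)}p_{R,f(x,y)}+\sum_{(x,y)\notin\mathcal{S}}\mu(x,y)\sum_{z,R\ni(x,y)}p_{R,z}\ge(1-\varepsilon)\eta$; (ii) $\forall (x,y)$: $\sum_{z,R\ni(x,y)}p_{R,z}\le\eta$; (iii) $\sum_{R,z}p_{R,z}=1$. $\overline{\mathrm{prt}}_\varepsilon(f)=\max_\mu\overline{\mathrm{prt}}^\mu_\varepsilon(f)$. *)

theory Defs
  imports "HOL-Probability.Probability_Mass_Function"
begin

text \<open>A node is either an output leaf, a message bit sent by Alice
  (distribution depends only on her input -- private coins), a message bit sent
  by Bob, or a public coin (distribution independent of the inputs).\<close>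

datatype ('x, 'y, 'z) proto =
    Out 'z
  | AMsg "'x \<Rightarrow> bool pmf" "bool \<Rightarrow> ('x, 'y, 'z) proto"
  | BMsg "'y \<Rightarrow> bool pmf" "bool \<Rightarrow> ('x, 'y, 'z) proto"
  | Pub "bool pmf" "bool \<Rightarrow> ('x, 'y, 'z) proto"

primrec run :: "('x, 'y, 'z) proto \<Rightarrow> 'x \<Rightarrow> 'y \<Rightarrow> (bool list \<times> 'z) pmf" where
  "run (Out z) x y = return_pmf ([], z)"
| "run (AMsg a k) x y = bind_pmf (a x) (\<lambda>b. map_pmf (\<lambda>(t, z). (b # t, z)) (run (k b) x y))"
| "run (BMsg a k) x y = bind_pmf (a y) (\<lambda>b. map_pmf (\<lambda>(t, z). (b # t, z)) (run (k b) x y))"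
| "run (Pub c k) x y = bind_pmf c (\<lambda>b. map_pmf (\<lambda>(t, z). (b # t, z)) (run (k b) x y))"

primrec outputs :: "('x, 'y, 'z) proto \<Rightarrow> 'z set" where
  "outputs (Out z) = {z}"
| "outputs (AMsg a k) = (\<Union>b. outputs (k b))"
| "outputs (BMsg a k) = (\<Union>b. outputs (k b))"
| "outputs (Pub c k) = (\<Union>b. outputs (k b))"

definition err_pt :: "('x \<times> 'y) set \<Rightarrow> ('x \<Rightarrow> 'y \<Rightarrow> 'z) \<Rightarrow> ('x, 'y, 'z) proto \<Rightarrow> 'x \<Rightarrow> 'y \<Rightarrow> real" where
  "err_pt S f \<pi> x y = (if (x, y) \<in> S then measure_pmf.prob (run \<pi> x y) {t. snd t \<noteq> f x y} else 0)"

definition err_dist :: "('x \<times> 'y) set \<Rightarrow> ('x \<Rightarrow> 'y \<Rightarrow> 'z) \<Rightarrow> ('x, 'y, 'z) proto \<Rightarrow> ('x \<times> 'y) pmf \<Rightarrow> real" where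
  "err_dist S f \<pi> \<mu> = measure_pmf.expectation \<mu> (\<lambda>(x, y). err_pt S f \<pi> x y)"

text \<open>Conditional mutual information I(A;C|B) (base 2) of a finitely supported joint
  distribution of (A,B,C).\<close>
definition cmi :: "('a \<times> 'b \<times> 'c) pmf \<Rightarrow> real" where
  "cmi P = (\<Sum>w\<in>set_pmf P. case w of (a, b, c) \<Rightarrow>
      pmf P (a, b, c) * log 2 (pmf P (a, b, c) * pmf (map_pmf (\<lambda>(a, b, c). b) P) b
        / (pmf (map_pmf (\<lambda>(a, b, c). (a, b)) P) (a, b) * pmf (map_pmf (\<lambda>(a, b, c). (b, c)) P) (b, c))))"

definition joint :: "('x, 'y, 'z) proto \<Rightarrow> ('x \<times> 'y) pmf \<Rightarrow> ('x \<times> 'y \<times> (bool list \<times> 'z)) pmf" where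
  "joint \<pi> \<mu> = bind_pmf \<mu> (\<lambda>(x, y). map_pmf (\<lambda>t. (x, y, t)) (run \<pi> x y))"

text \<open>IC_mu(pi) = I(X;Pi|Y) + I(Y;Pi|X).\<close>
definition IC :: "('x, 'y, 'z) proto \<Rightarrow> ('x \<times> 'y) pmf \<Rightarrow> real" where
  "IC \<pi> \<mu> = cmi (joint \<pi> \<mu>) + cmi (map_pmf (\<lambda>(x, y, t). (y, x, t)) (joint \<pi> \<mu>))"

definition IC_mu :: "'z set \<Rightarrow> ('x \<times> 'y) set \<Rightarrow> ('x \<Rightarrow> 'y \<Rightarrow> 'z) \<Rightarrow> ('x \<times> 'y) pmf \<Rightarrow> real \<Rightarrow> real" where
  "IC_mu Z S f \<mu> \<epsilon> = (INF \<pi> \<in> {\<pi>. outputs \<pi> \<subseteq> Z \<and> err_dist S f \<pi> \<mu> \<le> \<epsilon>}. IC \<pi> \<mu>)"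

definition IC_D :: "'x set \<Rightarrow> 'y set \<Rightarrow> 'z set \<Rightarrow> ('x \<times> 'y) set \<Rightarrow> ('x \<Rightarrow> 'y \<Rightarrow> 'z) \<Rightarrow> real \<Rightarrow> real" where
  "IC_D X Y Z S f \<epsilon> = (SUP \<mu> \<in> {\<mu>. set_pmf \<mu> \<subseteq> X \<times> Y}. IC_mu Z S f \<mu> \<epsilon>)"

definition rects :: "'x set \<Rightarrow> 'y set \<Rightarrow> ('x \<times> 'y) set set" where
  "rects X Y = {A \<times> B | A B. A \<subseteq> X \<and> B \<subseteq> Y}"

definition prt_feasible :: "'x set \<Rightarrow> 'y set \<Rightarrow> 'z set \<Rightarrow> ('x \<times> 'y) set \<Rightarrow> ('x \<Rightarrow> 'y \<Rightarrow> 'z)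
    \<Rightarrow> ('x \<times> 'y) pmf \<Rightarrow> real \<Rightarrow> real \<Rightarrow> (('x \<times> 'y) set \<Rightarrow> 'z \<Rightarrow> real) \<Rightarrow> bool" where
  "prt_feasible X Y Z S f \<mu> \<epsilon> \<eta> p \<longleftrightarrow>
     \<eta> > 0 \<and>
     (\<forall>R\<in>rects X Y. \<forall>z\<in>Z. p R z \<ge> 0) \<and>
     (\<Sum>xy\<in>S. pmf \<mu> xy * (\<Sum>R\<in>{R\<in>rects X Y. xy \<in> R}. p R (f (fst xy) (snd xy))))
       + (\<Sum>xy\<in>(X \<times> Y) - S. pmf \<mu> xy * (\<Sum>z\<in>Z. \<Sum>R\<in>{R\<in>rects X Y. xy \<in> R}. p R z))
       \<ge> (1 - \<epsilon>) * \<eta> \<and>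
     (\<forall>xy\<in>X \<times> Y. (\<Sum>z\<in>Z. \<Sum>R\<in>{R\<in>rects X Y. xy \<in> R}. p R z) \<le> \<eta>) \<and>
     (\<Sum>R\<in>rects X Y. \<Sum>z\<in>Z. p R z) = 1"

definition prt_mu :: "'x set \<Rightarrow> 'y set \<Rightarrow> 'z set \<Rightarrow> ('x \<times> 'y) set \<Rightarrow> ('x \<Rightarrow> 'y \<Rightarrow> 'z)
    \<Rightarrow> ('x \<times> 'y) pmf \<Rightarrow> real \<Rightarrow> real" where
  "prt_mu X Y Z S f \<mu> \<epsilon> = Inf {1 / \<eta> | \<eta> p. prt_feasible X Y Z S f \<mu> \<epsilon> \<eta> p}"

definition prt :: "'x set \<Rightarrow> 'y set \<Rightarrow> 'z set \<Rightarrow> ('x \<times> 'y) set \<Rightarrow> ('x \<Rightarrow> 'y \<Rightarrow> 'z) \<Rightarrow> real \<Rightarrow> real" where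
  "prt X Y Z S f \<epsilon> = (SUP \<mu> \<in> {\<mu>. set_pmf \<mu> \<subseteq> X \<times> Y}. prt_mu X Y Z S f \<mu> \<epsilon>)"

end

theory Submission
  imports Defs "HOL-Probability.Product_PMF" "HOL-Analysis.Harmonic_Numbers"
begin

text \<open>
  The proof compresses a protocol of low information cost into a feasible point of the
  linear program defining the relaxed partition bound.
  \<^item> The probability of a transcript factorises as \<open>qA t x * qB t y\<close> (rectangle property),
    so the joint distribution of inputs and transcript has product form.  For such
    distributions the conditional mutual information is the expectation of a
    log-likelihood ratio, which exceeds \<open>k\<close> only with probability \<open>(IC + 4) / k\<close>.
  \<^item> Using shared randomness (an independent grid point per transcript) each player
    decides privately whether to accept a transcript.  On typical transcripts this
    simulates the protocol up to the factor \<open>\<rho> = \<delta> / 2 powr (2 k)\<close>, and the resulting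
    random rectangles form an LP solution of value at most \<open>|Z| * 2 powr (2 k) / \<delta>\<close>.
    With \<open>k = 2 (IC + 4) / \<delta>\<close> this gives \<open>prt_mu \<le> |Z| * 2 powr (4 (IC + 4) / \<delta>) / \<delta>\<close>.
  \<^item> The bound is transferred to the infimum and supremum defining \<open>IC_D\<close> and \<open>prt\<close>; the
    protocol revealing both inputs shows that these range over non-empty bounded sets.
    Solving for \<open>IC_D\<close> gives the theorem with constant \<open>18\<close>.
\<close>

section \<open>Rectangle structure of protocol transcripts\<close>

text \<open>For a fixed transcript \<open>t\<close> (a path through the protocol tree together with its
  leaf output), the probability that the protocol produces \<open>t\<close> on input \<open>(x, y)\<close> factors
  as \<open>qA \<pi> t x * qB \<pi> t y\<close>: Alice's factor collects her own message probabilities and the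
  public coins, Bob's factor collects his message probabilities.\<close>

primrec qA :: "('x, 'y, 'z) proto \<Rightarrow> bool list \<times> 'z \<Rightarrow> 'x \<Rightarrow> real" where
  "qA (Out z) t x = (if t = ([], z) then 1 else 0)"
| "qA (AMsg a k) t x = (case fst t of [] \<Rightarrow> 0 | b # bs \<Rightarrow> pmf (a x) b * qA (k b) (bs, snd t) x)"
| "qA (BMsg a k) t x = (case fst t of [] \<Rightarrow> 0 | b # bs \<Rightarrow> qA (k b) (bs, snd t) x)"
| "qA (Pub c k) t x = (case fst t of [] \<Rightarrow> 0 | b # bs \<Rightarrow> pmf c b * qA (k b) (bs, snd t) x)"

primrec qB :: "('x, 'y, 'z) proto \<Rightarrow> bool list \<times> 'z \<Rightarrow> 'y \<Rightarrow> real" where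
  "qB (Out z) t y = 1"
| "qB (AMsg a k) t y = (case fst t of [] \<Rightarrow> 0 | b # bs \<Rightarrow> qB (k b) (bs, snd t) y)"
| "qB (BMsg a k) t y = (case fst t of [] \<Rightarrow> 0 | b # bs \<Rightarrow> pmf (a y) b * qB (k b) (bs, snd t) y)"
| "qB (Pub c k) t y = (case fst t of [] \<Rightarrow> 0 | b # bs \<Rightarrow> qB (k b) (bs, snd t) y)"

primrec leaves :: "('x, 'y, 'z) proto \<Rightarrow> (bool list \<times> 'z) set" where
  "leaves (Out z) = {([], z)}"
| "leaves (AMsg a k) = (\<Union>b. (\<lambda>(bs, z). (b # bs, z)) ` leaves (k b))"
| "leaves (BMsg a k) = (\<Union>b. (\<lambda>(bs, z). (b # bs, z)) ` leaves (k b))"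
| "leaves (Pub c k) = (\<Union>b. (\<lambda>(bs, z). (b # bs, z)) ` leaves (k b))"

lemma finite_leaves: "finite (leaves \<pi>)"
  by (induction \<pi>) auto

lemma leaves_nonempty: "leaves \<pi> \<noteq> {}"
  by (induction \<pi>) auto

lemma leaves_outputs: "t \<in> leaves \<pi> \<Longrightarrow> snd t \<in> outputs \<pi>"
  by (induction \<pi> arbitrary: t) fastforce+

lemma qA_nonneg: "qA \<pi> t x \<ge> 0"
  by (induction \<pi> arbitrary: t) (auto split: list.splits)

lemma qA_le_1: "qA \<pi> t x \<le> 1"
  by (induction \<pi> arbitrary: t) (auto split: list.splits intro!: mult_le_one qA_nonneg pmf_le_1)

lemma qB_nonneg: "qB \<pi> t y \<ge> 0"
  by (induction \<pi> arbitrary: t) (auto split: list.splits)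

lemma qB_le_1: "qB \<pi> t y \<le> 1"
  by (induction \<pi> arbitrary: t) (auto split: list.splits intro!: mult_le_one qB_nonneg pmf_le_1)

lemma pmf_bit_step:
  fixes M :: "bool pmf" and R :: "bool \<Rightarrow> (bool list \<times> 'z) pmf"
  shows "pmf (bind_pmf M (\<lambda>b. map_pmf (\<lambda>(t, z). (b # t, z)) (R b))) (l, z) =
           (case l of [] \<Rightarrow> 0 | b # bs \<Rightarrow> pmf M b * pmf (R b) (bs, z))"
proof -
  have prepend: "pmf (map_pmf (\<lambda>(t, z). (b # t, z)) (R b)) (l, z) =
      (case l of [] \<Rightarrow> 0 | b' # bs \<Rightarrow> if b' = b then pmf (R b) (bs, z) else 0)" for b
  proof (cases l)
    case (Cons b' bs)
    have "inj (\<lambda>(t::bool list, z::'z). (b # t, z))" by (auto simp: inj_def)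
    from pmf_map_inj'[OF this, of "R b" "(bs, z)"] show ?thesis
      using Cons by (auto intro!: pmf_map_outside)
  qed (auto intro!: pmf_map_outside)
  show ?thesis
    by (simp add: pmf_bind integral_measure_pmf[of UNIV] UNIV_bool prepend split: list.splits)
qed

theorem run_factorization: "pmf (run \<pi> x y) t = qA \<pi> t x * qB \<pi> t y"
  by (induction \<pi> arbitrary: t) (auto simp: pmf_return pmf_bit_step split: list.splits)

lemma qA_outside_leaves: "t \<notin> leaves \<pi> \<Longrightarrow> qA \<pi> t x = 0"
  by (induction \<pi> arbitrary: t) (force split: list.splits prod.splits)+

lemma set_run_leaves: "set_pmf (run \<pi> x y) \<subseteq> leaves \<pi>"
  using qA_outside_leaves by (fastforce simp: set_pmf_eq run_factorization)

lemma sum_qA_qB: "(\<Sum>t\<in>leaves \<pi>. qA \<pi> t x * qB \<pi> t y) = 1"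
  using sum_pmf_eq_1[OF finite_leaves set_run_leaves, of \<pi> x y] by (simp add: run_factorization)

section \<open>Conditional mutual information of product-form distributions\<close>

text \<open>The joint distribution of \<open>(X, Y, \<Pi>)\<close> has the form
  \<open>P(a, b, c) = m(a, b) * U c a * V c b\<close>, where \<open>\<Sum>c. U c a * V c b = 1\<close>.  For such
  distributions \<open>I(A; C | B)\<close> is the expectation of \<open>log\<^sub>2 (ratio a b c)\<close>, with
  \<open>ratio a b c = P(a | b, c) / P(a | b)\<close>.  We show that it lies between \<open>0\<close> and
  \<open>log\<^sub>2 |T|\<close> and that the ratio rarely exceeds \<open>2 powr k\<close> (a Markov-type tail bound);
  the latter is the source of the compression.\<close>

lemma prob_finite_support:
  assumes "finite W" "set_pmf M \<subseteq> W"
  shows "measure_pmf.prob M A = (\<Sum>w\<in>W. if w \<in> A then pmf M w else 0)"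
proof -
  have "measure_pmf.prob M A = measure M (A \<inter> set_pmf M)" by (simp add: measure_Int_set_pmf)
  also have "\<dots> = (\<Sum>w\<in>A \<inter> set_pmf M. pmf M w)"
    using assms by (intro measure_measure_pmf_finite) (auto intro: finite_subset)
  also have "\<dots> = (\<Sum>w\<in>W \<inter> A. pmf M w)"
    using assms by (intro sum.mono_neutral_left) (auto simp: set_pmf_eq)
  finally show ?thesis
    using assms by (simp add: sum.inter_restrict)
qed

lemma pmf_map_finite_support:
  assumes "finite W" "set_pmf M \<subseteq> W"
  shows "pmf (map_pmf g M) y = (\<Sum>w\<in>W. if g w = y then pmf M w else 0)"
  by (simp add: pmf_map prob_finite_support[OF assms])

locale product_form_dist =
  fixes P :: "('a \<times> 'b \<times> 'c) pmf" and A :: "'a set" and B :: "'b set" and T :: "'c set"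
    and m :: "'a \<Rightarrow> 'b \<Rightarrow> real" and U :: "'c \<Rightarrow> 'a \<Rightarrow> real" and V :: "'c \<Rightarrow> 'b \<Rightarrow> real"
  assumes finite_A: "finite A" and finite_B: "finite B" and finite_T: "finite T"
    and support: "set_pmf P \<subseteq> A \<times> B \<times> T"
    and pmf_P: "\<And>a b c. pmf P (a, b, c) = m a b * U c a * V c b"
    and m_nonneg: "\<And>a b. m a b \<ge> 0"
    and U_nonneg: "\<And>a c. U c a \<ge> 0" and U_le_1: "\<And>a c. U c a \<le> 1"
    and V_nonneg: "\<And>b c. V c b \<ge> 0" and V_le_1: "\<And>b c. V c b \<le> 1"
    and sum_UV: "\<And>a b. a \<in> A \<Longrightarrow> b \<in> B \<Longrightarrow> (\<Sum>c\<in>T. U c a * V c b) = 1"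
    and sum_m: "(\<Sum>a\<in>A. \<Sum>b\<in>B. m a b) = 1"
begin

text \<open>Marginal of \<open>b\<close>; the joint marginal of \<open>(b, c)\<close> is \<open>V c b * sU c b\<close>.\<close>
definition pb where "pb b = (\<Sum>a\<in>A. m a b)"
definition sU where "sU c b = (\<Sum>a\<in>A. m a b * U c a)"
definition ratio where "ratio a b c = U c a * pb b / sU c b"

lemma pb_nonneg: "pb b \<ge> 0"
  unfolding pb_def by (intro sum_nonneg m_nonneg)

lemma sU_nonneg: "sU c b \<ge> 0"
  unfolding sU_def by (intro sum_nonneg mult_nonneg_nonneg m_nonneg U_nonneg)

lemma sum_P: "(\<Sum>a\<in>A. \<Sum>b\<in>B. \<Sum>c\<in>T. pmf P (a, b, c)) = 1"
  using sum_pmf_eq_1[OF _ support] finite_A finite_B finite_T by (simp add: sum.cartesian_product)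

lemma sum_pb: "(\<Sum>b\<in>B. pb b) = 1"
  unfolding pb_def using sum_m by (simp add: sum.swap[of _ B A])

lemma sum_V_sU: "(\<Sum>b\<in>B. \<Sum>c\<in>T. V c b * sU c b) = 1"
proof -
  have "(\<Sum>b\<in>B. \<Sum>c\<in>T. V c b * sU c b) = (\<Sum>b\<in>B. \<Sum>a\<in>A. m a b * (\<Sum>c\<in>T. U c a * V c b))"
    unfolding sU_def by (simp add: sum_distrib_left sum_distrib_right mult_ac sum.swap[of _ T A])
  also have "\<dots> = (\<Sum>b\<in>B. pb b)" by (simp add: sum_UV pb_def)
  finally show ?thesis using sum_pb by simp
qed

lemma positive_point:
  assumes "pmf P (a, b, c) > 0"
  shows "m a b > 0" "U c a > 0" "V c b > 0" "a \<in> A" "b \<in> B" "c \<in> T" "sU c b > 0" "pb b > 0"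
proof -
  have nz: "m a b * U c a * V c b \<noteq> 0" using assms pmf_P by (metis less_irrefl)
  show m: "m a b > 0" and u: "U c a > 0" and "V c b > 0"
    using nz m_nonneg[of a b] U_nonneg[of c a] V_nonneg[of c b] by (auto simp: less_le)
  have "(a, b, c) \<in> set_pmf P" using assms by (simp add: set_pmf_eq)
  then show a: "a \<in> A" and "b \<in> B" and "c \<in> T" using support by auto
  have "m a b * U c a \<le> sU c b" unfolding sU_def
    by (rule member_le_sum[OF a]) (auto intro: mult_nonneg_nonneg m_nonneg U_nonneg simp: finite_A)
  then show "sU c b > 0" using m u by (smt (verit) mult_pos_pos)
  have "m a b \<le> pb b" unfolding pb_def
    by (rule member_le_sum[OF a]) (auto intro: m_nonneg simp: finite_A)
  then show "pb b > 0" using m by simp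
qed

lemma pmf_map_P:
  "pmf (map_pmf g P) w = (\<Sum>a\<in>A. \<Sum>b\<in>B. \<Sum>c\<in>T. if g (a, b, c) = w then pmf P (a, b, c) else 0)"
  using finite_A finite_B finite_T support
  by (simp add: pmf_map_finite_support[of "A \<times> B \<times> T"] sum.cartesian_product)

lemma sum_if_const: "(\<Sum>c\<in>C. if p then h c else 0) = (if p then sum h C else (0::real))"
  by (cases p) auto

lemma marginal_b: "b \<in> B \<Longrightarrow> pmf (map_pmf (\<lambda>(a, b, c). b) P) b = pb b"
proof -
  assume b: "b \<in> B"
  have "pmf (map_pmf (\<lambda>(a, b, c). b) P) b =
      (\<Sum>a\<in>A. \<Sum>b'\<in>B. if b' = b then (\<Sum>c\<in>T. pmf P (a, b', c)) else 0)"
    by (simp add: pmf_map_P sum_if_const)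
  also have "\<dots> = (\<Sum>a\<in>A. m a b * (\<Sum>c\<in>T. U c a * V c b))"
    using b finite_B by (simp add: sum.delta pmf_P sum_distrib_left mult_ac)
  also have "\<dots> = pb b" using b by (simp add: sum_UV pb_def)
  finally show ?thesis .
qed

lemma marginal_ab: "a \<in> A \<Longrightarrow> b \<in> B \<Longrightarrow> pmf (map_pmf (\<lambda>(a, b, c). (a, b)) P) (a, b) = m a b"
proof -
  assume a: "a \<in> A" and b: "b \<in> B"
  have "pmf (map_pmf (\<lambda>(a, b, c). (a, b)) P) (a, b) =
      (\<Sum>a'\<in>A. if a' = a then (\<Sum>b'\<in>B. if b' = b then (\<Sum>c\<in>T. pmf P (a', b', c)) else 0) else 0)"
    unfolding pmf_map_P by (intro sum.cong refl) (auto simp: sum_if_const)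
  also have "\<dots> = m a b * (\<Sum>c\<in>T. U c a * V c b)"
    using a b finite_A finite_B by (simp add: sum.delta pmf_P sum_distrib_left mult_ac)
  also have "\<dots> = m a b" using a b by (simp add: sum_UV)
  finally show ?thesis .
qed

lemma marginal_bc: "b \<in> B \<Longrightarrow> c \<in> T \<Longrightarrow> pmf (map_pmf (\<lambda>(a, b, c). (b, c)) P) (b, c) = V c b * sU c b"
proof -
  assume b: "b \<in> B" and c: "c \<in> T"
  have "pmf (map_pmf (\<lambda>(a, b, c). (b, c)) P) (b, c) =
      (\<Sum>a\<in>A. \<Sum>b'\<in>B. if b' = b then (\<Sum>c'\<in>T. if c' = c then pmf P (a, b', c') else 0) else 0)"
    unfolding pmf_map_P by (intro sum.cong refl) (auto simp: sum_if_const)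
  also have "\<dots> = V c b * sU c b"
    using b c finite_B finite_T by (simp add: sum.delta pmf_P sU_def sum_distrib_left mult_ac)
  finally show ?thesis .
qed

lemma cmi_as_expectation: "cmi P = (\<Sum>a\<in>A. \<Sum>b\<in>B. \<Sum>c\<in>T. pmf P (a, b, c) * log 2 (ratio a b c))"
proof -
  define summand where "summand = (\<lambda>w. case w of (a, b, c) \<Rightarrow>
      pmf P (a, b, c) * log 2 (pmf P (a, b, c) * pmf (map_pmf (\<lambda>(a, b, c). b) P) b
        / (pmf (map_pmf (\<lambda>(a, b, c). (a, b)) P) (a, b) * pmf (map_pmf (\<lambda>(a, b, c). (b, c)) P) (b, c))))"
  have "cmi P = sum summand (set_pmf P)" unfolding cmi_def summand_def by simp
  also have "\<dots> = sum summand (A \<times> B \<times> T)"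
    using support finite_A finite_B finite_T
    by (intro sum.mono_neutral_left) (auto simp: summand_def set_pmf_eq)
  also have "\<dots> = (\<Sum>(a, b, c)\<in>A \<times> B \<times> T. pmf P (a, b, c) * log 2 (ratio a b c))"
  proof (intro sum.cong refl, clarify)
    fix a b c
    show "summand (a, b, c) = pmf P (a, b, c) * log 2 (ratio a b c)"
    proof (cases "pmf P (a, b, c) > 0")
      case True
      note pos = positive_point[OF True]
      have "pmf P (a, b, c) * pmf (map_pmf (\<lambda>(a, b, c). b) P) b
        / (pmf (map_pmf (\<lambda>(a, b, c). (a, b)) P) (a, b) * pmf (map_pmf (\<lambda>(a, b, c). (b, c)) P) (b, c))
        = (m a b * U c a * V c b) * pb b / (m a b * (V c b * sU c b))"
        by (simp only: marginal_b[OF pos(5)] marginal_ab[OF pos(4,5)] marginal_bc[OF pos(5,6)] pmf_P)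
      also have "\<dots> = ratio a b c" unfolding ratio_def using pos by (simp add: field_simps)
      finally show ?thesis by (simp add: summand_def)
    next
      case False
      then have "pmf P (a, b, c) = 0" using pmf_nonneg[of P "(a, b, c)"] by linarith
      then show ?thesis by (simp add: summand_def)
    qed
  qed
  finally show ?thesis
    using finite_A finite_B finite_T by (simp add: sum.cartesian_product)
qed

text \<open>Comparison measure \<open>P(a, b) * P(c | b)\<close>; it has total mass at most one and
  \<open>P / ratio = Qind\<close> pointwise, which gives non-negativity of the information via
  \<open>ln z \<le> z - 1\<close> (Gibbs' inequality).\<close>
definition Qind where "Qind a b c = m a b * V c b * sU c b / pb b"

lemma Qind_nonneg: "Qind a b c \<ge> 0"
  unfolding Qind_def by (intro divide_nonneg_nonneg mult_nonneg_nonneg m_nonneg V_nonneg sU_nonneg pb_nonneg)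

lemma sum_Qind: "(\<Sum>a\<in>A. \<Sum>b\<in>B. \<Sum>c\<in>T. Qind a b c) \<le> 1"
proof -
  have "(\<Sum>a\<in>A. \<Sum>b\<in>B. \<Sum>c\<in>T. Qind a b c) = (\<Sum>b\<in>B. \<Sum>c\<in>T. (\<Sum>a\<in>A. m a b) * (V c b * sU c b / pb b))"
    unfolding Qind_def sum_distrib_right by (simp add: sum.swap[of _ A] sum.swap[of _ A T] mult_ac)
  also have "\<dots> \<le> (\<Sum>b\<in>B. \<Sum>c\<in>T. V c b * sU c b)"
    using pb_nonneg V_nonneg sU_nonneg unfolding pb_def[symmetric]
    by (intro sum_mono) (case_tac "pb b = 0"; simp)
  finally show ?thesis using sum_V_sU by simp
qed

lemma log_ratio_lower: "pmf P (a, b, c) * log 2 (ratio a b c) \<ge> (pmf P (a, b, c) - Qind a b c) / ln 2"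
proof (cases "pmf P (a, b, c) > 0")
  case True
  note pos = positive_point[OF True]
  have ratio_pos: "ratio a b c > 0" unfolding ratio_def using pos by simp
  have P_over_ratio: "pmf P (a, b, c) / ratio a b c = Qind a b c"
    unfolding ratio_def Qind_def pmf_P using pos by (simp add: field_simps)
  have "ln (1 / ratio a b c) \<le> 1 / ratio a b c - 1" using ratio_pos by (intro ln_le_minus_one) simp
  then have "pmf P (a, b, c) * (- ln (ratio a b c)) \<le> pmf P (a, b, c) * (1 / ratio a b c - 1)"
    using True ratio_pos by (intro mult_left_mono) (auto simp: ln_div)
  then have "pmf P (a, b, c) - Qind a b c \<le> pmf P (a, b, c) * ln (ratio a b c)"
    using P_over_ratio by (simp add: algebra_simps)
  then show ?thesis by (simp add: log_def divide_right_mono)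
next
  case False
  then have "pmf P (a, b, c) = 0" using pmf_nonneg[of P "(a, b, c)"] by linarith
  then show ?thesis using Qind_nonneg[of a b c] by simp
qed

lemma cmi_nonneg: "cmi P \<ge> 0"
proof -
  have "(\<Sum>a\<in>A. \<Sum>b\<in>B. \<Sum>c\<in>T. (pmf P (a, b, c) - Qind a b c) / ln 2) \<le> cmi P"
    unfolding cmi_as_expectation by (intro sum_mono log_ratio_lower)
  moreover have "(\<Sum>a\<in>A. \<Sum>b\<in>B. \<Sum>c\<in>T. (pmf P (a, b, c) - Qind a b c) / ln 2)
      = (1 - (\<Sum>a\<in>A. \<Sum>b\<in>B. \<Sum>c\<in>T. Qind a b c)) / ln 2"
    by (simp add: sum_divide_distrib[symmetric] sum_subtractf sum_P)
  ultimately show ?thesis using sum_Qind by (smt (verit) divide_nonneg_pos ln_gt_zero)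
qed

text \<open>The negative part of the information density has expectation at most \<open>1 / ln 2 \<le> 2\<close>.\<close>
lemma negative_part_bound:
  "(\<Sum>a\<in>A. \<Sum>b\<in>B. \<Sum>c\<in>T. pmf P (a, b, c) * max 0 (- log 2 (ratio a b c))) \<le> 2"
proof -
  have "pmf P (a, b, c) * max 0 (- log 2 (ratio a b c)) \<le> Qind a b c / ln 2" for a b c
  proof -
    have "- (pmf P (a, b, c) * log 2 (ratio a b c)) \<le> (Qind a b c - pmf P (a, b, c)) / ln 2"
      using log_ratio_lower[of a b c] by (simp add: field_simps)
    also have "\<dots> \<le> Qind a b c / ln 2" by (simp add: divide_right_mono)
    finally show ?thesis using Qind_nonneg[of a b c] by (simp add: max_def)
  qed
  then have "(\<Sum>a\<in>A. \<Sum>b\<in>B. \<Sum>c\<in>T. pmf P (a, b, c) * max 0 (- log 2 (ratio a b c)))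
      \<le> (\<Sum>a\<in>A. \<Sum>b\<in>B. \<Sum>c\<in>T. Qind a b c) / ln 2"
    unfolding sum_divide_distrib by (intro sum_mono)
  also have "\<dots> \<le> 1 / ln 2" using sum_Qind by (simp add: divide_right_mono)
  also have "\<dots> \<le> 2" using ln2_ge_two_thirds by (simp add: field_simps)
  finally show ?thesis .
qed

lemma ratio_tail_bound:
  assumes k: "k > 0"
  shows "(\<Sum>a\<in>A. \<Sum>b\<in>B. \<Sum>c\<in>T. pmf P (a, b, c) * of_bool (U c a * pb b > 2 powr k * sU c b))
          \<le> (cmi P + 2) / k"
proof -
  define dens where "dens a b c = pmf P (a, b, c) * log 2 (ratio a b c)
      + pmf P (a, b, c) * max 0 (- log 2 (ratio a b c))" for a b c
  have point: "pmf P (a, b, c) * of_bool (U c a * pb b > 2 powr k * sU c b) \<le> dens a b c / k" for a b c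
  proof (cases "pmf P (a, b, c) > 0 \<and> U c a * pb b > 2 powr k * sU c b")
    case True
    note pos = positive_point[OF conjunct1[OF True]]
    have "ratio a b c > 2 powr k" unfolding ratio_def using True pos by (simp add: field_simps)
    then have "log 2 (ratio a b c) > k" by (smt (verit) less_log_iff powr_gt_zero)
    moreover from this have "pmf P (a, b, c) * k \<le> pmf P (a, b, c) * log 2 (ratio a b c)"
      using True by (intro mult_left_mono) auto
    ultimately show ?thesis using True k by (simp add: dens_def field_simps)
  next
    case False
    have "0 \<le> dens a b c" unfolding dens_def
      by (cases "log 2 (ratio a b c) \<ge> 0") (auto simp: algebra_simps)
    then show ?thesis using False k pmf_nonneg[of P "(a, b, c)"] by auto
  qed
  have "(\<Sum>a\<in>A. \<Sum>b\<in>B. \<Sum>c\<in>T. pmf P (a, b, c) * of_bool (U c a * pb b > 2 powr k * sU c b))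
      \<le> (\<Sum>a\<in>A. \<Sum>b\<in>B. \<Sum>c\<in>T. dens a b c) / k"
    unfolding sum_divide_distrib by (intro sum_mono point)
  also have "\<dots> = (cmi P + (\<Sum>a\<in>A. \<Sum>b\<in>B. \<Sum>c\<in>T. pmf P (a, b, c) * max 0 (- log 2 (ratio a b c)))) / k"
    unfolding cmi_as_expectation dens_def by (simp add: sum.distrib)
  also have "\<dots> \<le> (cmi P + 2) / k" using negative_part_bound k by (simp add: divide_right_mono)
  finally show ?thesis .
qed

text \<open>Upper bound \<open>I(A; C | B) \<le> log\<^sub>2 |T|\<close>, by comparison with the measure \<open>Qunif\<close> of
  total mass at most one (Gibbs' inequality against the uniform distribution on \<open>T\<close>).\<close>
definition Qunif where "Qunif a b c = pmf P (a, b, c) * pb b / (card T * sU c b)"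

lemma Qunif_nonneg: "Qunif a b c \<ge> 0"
  unfolding Qunif_def by (intro divide_nonneg_nonneg mult_nonneg_nonneg pb_nonneg sU_nonneg) auto

lemma sum_Qunif: "(\<Sum>a\<in>A. \<Sum>b\<in>B. \<Sum>c\<in>T. Qunif a b c) \<le> 1"
proof -
  have "(\<Sum>a\<in>A. \<Sum>b\<in>B. \<Sum>c\<in>T. Qunif a b c)
      = (\<Sum>b\<in>B. \<Sum>c\<in>T. (\<Sum>a\<in>A. m a b * U c a) * (V c b * pb b / (card T * sU c b)))"
    unfolding Qunif_def pmf_P sum_distrib_right by (simp add: sum.swap[of _ A] sum.swap[of _ A T] mult_ac)
  also have "\<dots> \<le> (\<Sum>b\<in>B. \<Sum>c\<in>T. pb b / card T)"
  proof (intro sum_mono)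
    fix b c
    have "V c b * (pb b / card T) \<le> pb b / card T"
      using V_le_1[of c b] V_nonneg[of c b] pb_nonneg[of b] by (intro mult_left_le_one_le) auto
    then show "(\<Sum>a\<in>A. m a b * U c a) * (V c b * pb b / (card T * sU c b)) \<le> pb b / card T"
      unfolding sU_def[symmetric] using pb_nonneg[of b] by (cases "sU c b = 0") (auto simp: field_simps)
  qed
  also have "\<dots> \<le> (\<Sum>b\<in>B. pb b)"
    using finite_T pb_nonneg by (intro sum_mono) (simp add: card_gt_0_iff)
  finally show ?thesis using sum_pb by simp
qed

lemma log_ratio_upper:
  assumes "T \<noteq> {}"
  shows "pmf P (a, b, c) * log 2 (ratio a b c) \<le> pmf P (a, b, c) * log 2 (card T) + (Qunif a b c - pmf P (a, b, c)) / ln 2"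
proof (cases "pmf P (a, b, c) > 0")
  case True
  note pos = positive_point[OF True]
  have card_T: "real (card T) > 0" using finite_T assms by (simp add: card_gt_0_iff)
  define q where "q = pb b / (card T * sU c b)"
  have q_pos: "q > 0" unfolding q_def using pos card_T by simp
  have "ratio a b c \<le> card T * q" unfolding ratio_def q_def using pos card_T U_le_1[of c a]
    by (simp add: field_simps mult_right_le_one_le)
  then have "log 2 (ratio a b c) \<le> log 2 (card T * q)"
    using pos card_T q_pos by (simp add: ratio_def)
  also have "\<dots> = log 2 (card T) + log 2 q" using card_T q_pos by (simp add: log_mult)
  also have "log 2 q \<le> (q - 1) / ln 2"
    using ln_le_minus_one[OF q_pos] by (simp add: log_def divide_right_mono)
  finally have "pmf P (a, b, c) * log 2 (ratio a b c) \<le> pmf P (a, b, c) * (log 2 (card T) + (q - 1) / ln 2)"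
    using True by (intro mult_left_mono) auto
  also have "\<dots> = pmf P (a, b, c) * log 2 (card T) + (Qunif a b c - pmf P (a, b, c)) / ln 2"
    unfolding Qunif_def q_def by (simp add: field_simps)
  finally show ?thesis .
next
  case False
  then have "pmf P (a, b, c) = 0" using pmf_nonneg[of P "(a, b, c)"] by linarith
  then show ?thesis using Qunif_nonneg[of a b c] by simp
qed

lemma cmi_le_log_card:
  assumes "T \<noteq> {}"
  shows "cmi P \<le> log 2 (card T)"
proof -
  have "cmi P \<le> (\<Sum>a\<in>A. \<Sum>b\<in>B. \<Sum>c\<in>T. pmf P (a, b, c) * log 2 (card T) + (Qunif a b c - pmf P (a, b, c)) / ln 2)"
    unfolding cmi_as_expectation by (intro sum_mono log_ratio_upper[OF assms])
  also have "\<dots> = log 2 (card T) + ((\<Sum>a\<in>A. \<Sum>b\<in>B. \<Sum>c\<in>T. Qunif a b c) - 1) / ln 2"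
    by (simp add: sum.distrib sum_divide_distrib[symmetric] sum_distrib_right[symmetric] sum_subtractf sum_P)
  also have "\<dots> \<le> log 2 (card T)"
    using sum_Qunif by (simp add: divide_nonpos_pos)
  finally show ?thesis .
qed

end

section \<open>Information complexity of a protocol\<close>

lemma pmf_joint: "pmf (joint \<pi> \<mu>) (x, y, t) = pmf \<mu> (x, y) * qA \<pi> t x * qB \<pi> t y"
proof -
  have "pmf (joint \<pi> \<mu>) (x, y, t) =
      measure_pmf.expectation \<mu> (\<lambda>w. if w = (x, y) then pmf (run \<pi> x y) t else 0)"
    unfolding joint_def pmf_bind
  proof (intro Bochner_Integration.integral_cong refl, clarify)
    fix x' y'
    have "inj (\<lambda>t. (x, y, t))" by (auto simp: inj_def)
    from pmf_map_inj'[OF this, of "run \<pi> x y" t] show "pmf (map_pmf (\<lambda>t. (x', y', t)) (run \<pi> x' y')) (x, y, t) =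
        (if (x', y') = (x, y) then pmf (run \<pi> x y) t else 0)"
      by (auto intro!: pmf_map_outside)
  qed
  also have "\<dots> = pmf \<mu> (x, y) * pmf (run \<pi> x y) t"
    by (subst integral_measure_pmf[of "{(x, y)}"]) (auto split: if_splits)
  finally show ?thesis by (simp add: run_factorization mult_ac)
qed

lemma pmf_joint_swapped:
  "pmf (map_pmf (\<lambda>(x, y, t). (y, x, t)) (joint \<pi> \<mu>)) (y, x, t) = pmf \<mu> (x, y) * qB \<pi> t y * qA \<pi> t x"
proof -
  have "inj (\<lambda>(x, y, t). (y, x, t))" by (auto simp: inj_def)
  from pmf_map_inj'[OF this, of "joint \<pi> \<mu>" "(x, y, t)"] show ?thesis
    by (simp add: pmf_joint mult_ac)
qed

lemma set_joint: "set_pmf \<mu> \<subseteq> X \<times> Y \<Longrightarrow> set_pmf (joint \<pi> \<mu>) \<subseteq> X \<times> Y \<times> leaves \<pi>"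
  unfolding joint_def using set_run_leaves by (fastforce simp: set_bind_pmf)

lemma sum_pmf_product:
  "finite X \<Longrightarrow> finite Y \<Longrightarrow> set_pmf \<mu> \<subseteq> X \<times> Y \<Longrightarrow> (\<Sum>x\<in>X. \<Sum>y\<in>Y. pmf \<mu> (x, y)) = 1"
  using sum_pmf_eq_1[of "X \<times> Y" \<mu>] by (simp add: sum.cartesian_product)

lemma joint_product_form:
  assumes "finite X" "finite Y" "set_pmf \<mu> \<subseteq> X \<times> Y"
  shows "product_form_dist (joint \<pi> \<mu>) X Y (leaves \<pi>) (\<lambda>x y. pmf \<mu> (x, y)) (qA \<pi>) (qB \<pi>)"
  by unfold_locales (auto simp: assms finite_leaves set_joint pmf_joint qA_nonneg qA_le_1
      qB_nonneg qB_le_1 sum_qA_qB sum_pmf_product)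

lemma joint_swapped_product_form:
  assumes "finite X" "finite Y" "set_pmf \<mu> \<subseteq> X \<times> Y"
  shows "product_form_dist (map_pmf (\<lambda>(x, y, t). (y, x, t)) (joint \<pi> \<mu>)) Y X (leaves \<pi>)
           (\<lambda>y x. pmf \<mu> (x, y)) (qB \<pi>) (qA \<pi>)"
proof unfold_locales
  show "set_pmf (map_pmf (\<lambda>(x, y, t). (y, x, t)) (joint \<pi> \<mu>)) \<subseteq> Y \<times> X \<times> leaves \<pi>"
    using set_joint[OF assms(3), of \<pi>] by auto
  show "(\<Sum>y\<in>Y. \<Sum>x\<in>X. pmf \<mu> (x, y)) = 1"
    using sum_pmf_product[OF assms] by (simp add: sum.swap[of _ Y X])
qed (auto simp: assms finite_leaves pmf_joint_swapped qA_nonneg qA_le_1 qB_nonneg qB_le_1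
      sum_qA_qB mult_ac)

lemma IC_nonneg:
  assumes "finite X" "finite Y" "set_pmf \<mu> \<subseteq> X \<times> Y"
  shows "IC \<pi> \<mu> \<ge> 0"
  using product_form_dist.cmi_nonneg[OF joint_product_form[OF assms, of \<pi>]]
    product_form_dist.cmi_nonneg[OF joint_swapped_product_form[OF assms, of \<pi>]]
  by (simp add: IC_def)

lemma IC_le_log_leaves:
  assumes "finite X" "finite Y" "set_pmf \<mu> \<subseteq> X \<times> Y"
  shows "IC \<pi> \<mu> \<le> 2 * log 2 (card (leaves \<pi>))"
  using product_form_dist.cmi_le_log_card[OF joint_product_form[OF assms, of \<pi>] leaves_nonempty]
    product_form_dist.cmi_le_log_card[OF joint_swapped_product_form[OF assms, of \<pi>] leaves_nonempty]
  by (simp add: IC_def)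

definition pX :: "('x \<times> 'y) pmf \<Rightarrow> 'y set \<Rightarrow> 'x \<Rightarrow> real" where
  "pX \<mu> Y x = (\<Sum>y\<in>Y. pmf \<mu> (x, y))"

definition pY :: "('x \<times> 'y) pmf \<Rightarrow> 'x set \<Rightarrow> 'y \<Rightarrow> real" where
  "pY \<mu> X y = (\<Sum>x\<in>X. pmf \<mu> (x, y))"

definition wA :: "('x \<times> 'y) pmf \<Rightarrow> 'x set \<Rightarrow> ('x, 'y, 'z) proto \<Rightarrow> bool list \<times> 'z \<Rightarrow> 'y \<Rightarrow> real" where
  "wA \<mu> X \<pi> t y = (\<Sum>x\<in>X. pmf \<mu> (x, y) * qA \<pi> t x)"

definition wB :: "('x \<times> 'y) pmf \<Rightarrow> 'y set \<Rightarrow> ('x, 'y, 'z) proto \<Rightarrow> bool list \<times> 'z \<Rightarrow> 'x \<Rightarrow> real" where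
  "wB \<mu> Y \<pi> t x = (\<Sum>y\<in>Y. pmf \<mu> (x, y) * qB \<pi> t y)"

text \<open>A transcript \<open>t\<close> is \<open>K\<close>-typical for \<open>(x, y)\<close> if conditioning on \<open>x\<close> (resp. \<open>y\<close>)
  increases its probability given the other input by a factor at most \<open>K\<close>:
  \<open>Pr[t | x, y] \<le> K * Pr[t | y]\<close> and \<open>Pr[t | x, y] \<le> K * Pr[t | x]\<close>.\<close>
definition typical ::
    "'x set \<Rightarrow> 'y set \<Rightarrow> ('x \<times> 'y) pmf \<Rightarrow> ('x, 'y, 'z) proto \<Rightarrow> real \<Rightarrow> bool list \<times> 'z \<Rightarrow> 'x \<Rightarrow> 'y \<Rightarrow> bool" where
  "typical X Y \<mu> \<pi> K t x y \<longleftrightarrow>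
     qA \<pi> t x * pY \<mu> X y \<le> K * wA \<mu> X \<pi> t y \<and> qB \<pi> t y * pX \<mu> Y x \<le> K * wB \<mu> Y \<pi> t x"

lemma atypical_mass_bound:
  assumes fin: "finite X" "finite Y" and supp: "set_pmf \<mu> \<subseteq> X \<times> Y" and k: "k > 0"
  shows "(\<Sum>x\<in>X. \<Sum>y\<in>Y. \<Sum>t\<in>leaves \<pi>. pmf \<mu> (x, y) * qA \<pi> t x * qB \<pi> t y *
            of_bool (\<not> typical X Y \<mu> \<pi> (2 powr k) t x y)) \<le> (IC \<pi> \<mu> + 4) / k"
proof -
  interpret J1: product_form_dist "joint \<pi> \<mu>" X Y "leaves \<pi>" "\<lambda>x y. pmf \<mu> (x, y)" "qA \<pi>" "qB \<pi>"
    by (rule joint_product_form[OF fin supp])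
  interpret J2: product_form_dist "map_pmf (\<lambda>(x, y, t). (y, x, t)) (joint \<pi> \<mu>)" Y X "leaves \<pi>"
      "\<lambda>y x. pmf \<mu> (x, y)" "qB \<pi>" "qA \<pi>"
    by (rule joint_swapped_product_form[OF fin supp])
  define w where "w x y t = pmf \<mu> (x, y) * qA \<pi> t x * qB \<pi> t y" for x y t
  have w_nonneg: "w x y t \<ge> 0" for x y t unfolding w_def by (simp add: qA_nonneg qB_nonneg)
  have A_tail: "(\<Sum>x\<in>X. \<Sum>y\<in>Y. \<Sum>t\<in>leaves \<pi>. w x y t *
        of_bool (qA \<pi> t x * pY \<mu> X y > 2 powr k * wA \<mu> X \<pi> t y)) \<le> (cmi (joint \<pi> \<mu>) + 2) / k"
    using J1.ratio_tail_bound[OF k]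
    by (simp add: w_def pmf_joint J1.pb_def J1.sU_def pY_def wA_def mult_ac)
  have B_tail: "(\<Sum>x\<in>X. \<Sum>y\<in>Y. \<Sum>t\<in>leaves \<pi>. w x y t *
        of_bool (qB \<pi> t y * pX \<mu> Y x > 2 powr k * wB \<mu> Y \<pi> t x))
      \<le> (cmi (map_pmf (\<lambda>(x, y, t). (y, x, t)) (joint \<pi> \<mu>)) + 2) / k"
    using J2.ratio_tail_bound[OF k]
    by (subst sum.swap) (simp add: w_def pmf_joint_swapped J2.pb_def J2.sU_def pX_def wB_def mult_ac)
  have "(\<Sum>x\<in>X. \<Sum>y\<in>Y. \<Sum>t\<in>leaves \<pi>. w x y t * of_bool (\<not> typical X Y \<mu> \<pi> (2 powr k) t x y))
      \<le> (\<Sum>x\<in>X. \<Sum>y\<in>Y. \<Sum>t\<in>leaves \<pi>. w x y t * of_bool (qA \<pi> t x * pY \<mu> X y > 2 powr k * wA \<mu> X \<pi> t y))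
       + (\<Sum>x\<in>X. \<Sum>y\<in>Y. \<Sum>t\<in>leaves \<pi>. w x y t * of_bool (qB \<pi> t y * pX \<mu> Y x > 2 powr k * wB \<mu> Y \<pi> t x))"
    unfolding sum.distrib[symmetric] typical_def
    by (intro sum_mono) (auto simp: algebra_simps w_nonneg)
  also have "\<dots> \<le> (cmi (joint \<pi> \<mu>) + 2) / k + (cmi (map_pmf (\<lambda>(x, y, t). (y, x, t)) (joint \<pi> \<mu>)) + 2) / k"
    using A_tail B_tail by (rule add_mono)
  also have "\<dots> = (IC \<pi> \<mu> + 4) / k" using k by (simp add: IC_def field_simps)
  finally show ?thesis by (simp add: w_def)
qed

section \<open>Probabilistic tools\<close>

subsection \<open>Rounding a probability to a grid\<close>

text \<open>A uniformly random grid point \<open>i / n\<close>, \<open>1 \<le> i \<le> n\<close>, lies below \<open>\<theta>\<close> with probability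
  \<open>grid_frac n \<theta>\<close>, which is within \<open>1 / n\<close> of \<open>\<theta>\<close> for \<open>\<theta> \<in> [0, 1]\<close>.  Sampling such
  thresholds independently for every transcript replaces the players' private
  probabilities by shared randomness.\<close>
definition grid_frac :: "nat \<Rightarrow> real \<Rightarrow> real" where
  "grid_frac n \<theta> = real (card {i\<in>{1..n}. real i / real n \<le> \<theta>}) / real n"

text \<open>The two coordinates of a uniform grid point are independent.\<close>
lemma expectation_grid_pair:
  assumes n: "n > 0"
  shows "measure_pmf.expectation (pmf_of_set ({1..n} \<times> {1..n}))
     (\<lambda>g. of_bool (real (fst g) / real n \<le> \<theta>1 \<and> real (snd g) / real n \<le> \<theta>2)) = grid_frac n \<theta>1 * grid_frac n \<theta>2"
proof -
  have ne: "{1..n} \<times> {1..n} \<noteq> {}" using n by auto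
  have "measure_pmf.expectation (pmf_of_set ({1..n} \<times> {1..n}))
     (\<lambda>g. of_bool (real (fst g) / real n \<le> \<theta>1 \<and> real (snd g) / real n \<le> \<theta>2))
     = (\<Sum>g\<in>{1..n} \<times> {1..n}. of_bool (real (fst g) / real n \<le> \<theta>1 \<and> real (snd g) / real n \<le> \<theta>2)) / card ({1..n} \<times> {1..n})"
    using ne by (simp add: integral_pmf_of_set)
  also have "(\<Sum>g\<in>{1..n} \<times> {1..n}. of_bool (real (fst g) / real n \<le> \<theta>1 \<and> real (snd g) / real n \<le> \<theta>2) :: real)
     = (\<Sum>i\<in>{1..n}. of_bool (real i / real n \<le> \<theta>1)) * (\<Sum>j\<in>{1..n}. of_bool (real j / real n \<le> \<theta>2))"
  proof -
    have "(\<Sum>g\<in>{1..n} \<times> {1..n}. of_bool (real (fst g) / real n \<le> \<theta>1 \<and> real (snd g) / real n \<le> \<theta>2) :: real)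
       = (\<Sum>(i, j)\<in>{1..n} \<times> {1..n}. of_bool (real i / real n \<le> \<theta>1) * of_bool (real j / real n \<le> \<theta>2))"
      by (intro sum.cong refl) auto
    also have "\<dots> = (\<Sum>i\<in>{1..n}. \<Sum>j\<in>{1..n}. of_bool (real i / real n \<le> \<theta>1) * of_bool (real j / real n \<le> \<theta>2))"
      by (simp only: sum.cartesian_product)
    also have "\<dots> = (\<Sum>i\<in>{1..n}. of_bool (real i / real n \<le> \<theta>1)) * (\<Sum>j\<in>{1..n}. of_bool (real j / real n \<le> \<theta>2))"
      by (simp only: sum_product)
    finally show ?thesis .
  qed
  also have "\<dots> = real (card {i\<in>{1..n}. real i / real n \<le> \<theta>1}) * real (card {i\<in>{1..n}. real i / real n \<le> \<theta>2})"
    by (simp add: Int_def conj_commute)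
  finally show ?thesis by (simp add: grid_frac_def card_cartesian_product)
qed

lemma grid_frac_nonneg: "grid_frac n \<theta> \<ge> 0" by (simp add: grid_frac_def)

lemma grid_frac_le_1: "grid_frac n \<theta> \<le> 1"
proof -
  have "card {i\<in>{1..n}. real i / real n \<le> \<theta>} \<le> card {1..n}" by (intro card_mono) auto
  then show ?thesis by (cases "n = 0") (auto simp: grid_frac_def)
qed

lemma grid_frac_upper: assumes "\<theta> \<ge> 0" shows "grid_frac n \<theta> \<le> \<theta>"
proof (cases "n = 0")
  case True then show ?thesis using assms by (simp add: grid_frac_def)
next
  case False
  then have n: "real n > 0" by simp
  have "{i\<in>{1..n}. real i / real n \<le> \<theta>} \<subseteq> {1..nat \<lfloor>real n * \<theta>\<rfloor>}"
  proof
    fix i assume "i \<in> {i\<in>{1..n}. real i / real n \<le> \<theta>}"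
    then have i: "i \<ge> 1" "real i \<le> real n * \<theta>" using n by (auto simp: field_simps)
    then have "int i \<le> \<lfloor>real n * \<theta>\<rfloor>" by (simp add: le_floor_iff)
    then show "i \<in> {1..nat \<lfloor>real n * \<theta>\<rfloor>}" using i by (auto simp: le_nat_iff)
  qed
  then have "card {i\<in>{1..n}. real i / real n \<le> \<theta>} \<le> card {1..nat \<lfloor>real n * \<theta>\<rfloor>}"
    by (intro card_mono) auto
  then have "card {i\<in>{1..n}. real i / real n \<le> \<theta>} \<le> nat \<lfloor>real n * \<theta>\<rfloor>" by simp
  moreover have fl: "\<lfloor>real n * \<theta>\<rfloor> \<ge> 0" using assms n by simp
  moreover have "real (nat \<lfloor>real n * \<theta>\<rfloor>) = real_of_int \<lfloor>real n * \<theta>\<rfloor>" using fl by simp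
  moreover have "real_of_int \<lfloor>real n * \<theta>\<rfloor> \<le> real n * \<theta>" by (rule of_int_floor_le)
  ultimately have "real (card {i\<in>{1..n}. real i / real n \<le> \<theta>}) \<le> real n * \<theta>"
    by (metis of_nat_mono order_trans)
  then show ?thesis using n by (simp add: grid_frac_def field_simps)
qed

lemma grid_frac_lower: assumes "\<theta> \<le> 1" "n > 0" shows "grid_frac n \<theta> \<ge> \<theta> - 1 / n"
proof (cases "\<theta> < 0")
  case True then show ?thesis using grid_frac_nonneg[of n \<theta>] by (smt (verit) of_nat_0_le_iff divide_nonneg_nonneg)
next
  case False
  have n: "real n > 0" using assms by simp
  have "{1..nat \<lfloor>real n * \<theta>\<rfloor>} \<subseteq> {i\<in>{1..n}. real i / real n \<le> \<theta>}"
  proof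
    fix i assume i: "i \<in> {1..nat \<lfloor>real n * \<theta>\<rfloor>}"
    then have "real i \<le> \<lfloor>real n * \<theta>\<rfloor>" by auto
    then have ri: "real i \<le> real n * \<theta>" by linarith
    moreover have "real n * \<theta> \<le> real n" using assms n by (simp add: mult_left_le)
    ultimately have "real i \<le> real n" by linarith
    then have "i \<le> n" by simp
    then show "i \<in> {i\<in>{1..n}. real i / real n \<le> \<theta>}" using i n ri by (auto simp: field_simps)
  qed
  then have "card {1..nat \<lfloor>real n * \<theta>\<rfloor>} \<le> card {i\<in>{1..n}. real i / real n \<le> \<theta>}"
    by (intro card_mono) auto
  then have "nat \<lfloor>real n * \<theta>\<rfloor> \<le> card {i\<in>{1..n}. real i / real n \<le> \<theta>}" by simp
  moreover have "real n * \<theta> - 1 \<le> real (nat \<lfloor>real n * \<theta>\<rfloor>)" using False n by linarith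
  ultimately have "real n * \<theta> - 1 \<le> real (card {i\<in>{1..n}. real i / real n \<le> \<theta>})" by linarith
  then have "(real n * \<theta> - 1) / n \<le> real (card {i\<in>{1..n}. real i / real n \<le> \<theta>}) / n"
    using n by (intro divide_right_mono) auto
  moreover have "(real n * \<theta> - 1) / n = \<theta> - 1 / n" using n by (simp add: field_simps)
  ultimately show ?thesis by (simp add: grid_frac_def)
qed

lemma grid_frac_product_lower:
  assumes "0 \<le> a" "a \<le> 1" "0 \<le> b" "b \<le> 1" "n > 0"
  shows "grid_frac n a * grid_frac n b \<ge> a * b - 2 / n"
proof -
  have "grid_frac n a * grid_frac n b \<ge> (a - 1/n) * grid_frac n b"
    using grid_frac_lower[of a n] assms grid_frac_nonneg by (intro mult_right_mono) auto
  moreover have "a * grid_frac n b \<ge> a * (b - 1/n)"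
    using grid_frac_lower[of b n] assms by (intro mult_left_mono) auto
  moreover have "grid_frac n b / n \<le> 1 / n" "a / n \<le> 1 / n"
    using grid_frac_le_1[of n b] assms by (auto intro: divide_right_mono)
  ultimately show ?thesis by (simp add: algebra_simps)
qed

lemma expectation_Pi_pmf_one:
  assumes "finite L" "t \<in> L"
  shows "measure_pmf.expectation (Pi_pmf L d (\<lambda>_. G)) (\<lambda>r. \<phi> (r t)) = measure_pmf.expectation G (\<phi> :: _ \<Rightarrow> real)"
proof -
  have "map_pmf (\<lambda>r. r t) (Pi_pmf L d (\<lambda>_. G)) = G"
    using Pi_pmf_component[OF assms(1), of t d "\<lambda>_. G"] assms(2) by simp
  then show ?thesis by (metis integral_map_pmf)
qed

lemma expectation_Pi_pmf_two:
  assumes fin: "finite L" and t: "t \<in> L" "t' \<in> L" "t \<noteq> t'" and fin_G: "finite (set_pmf G)"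
    and nonneg: "\<And>v. \<phi> v \<ge> 0" "\<And>v. \<psi> v \<ge> 0"
  shows "measure_pmf.expectation (Pi_pmf L d (\<lambda>_. G)) (\<lambda>r. \<phi> (r t) * \<psi> (r t'))
     = measure_pmf.expectation G \<phi> * measure_pmf.expectation G (\<psi> :: _ \<Rightarrow> real)"
proof -
  define F where "F = (\<lambda>s v. if s = t then \<phi> v else if s = t' then \<psi> v else 1)"
  have split_L: "L = insert t (insert t' (L - {t, t'}))" using t by auto
  have prod_two: "(\<Prod>s\<in>L. h s) = h t * h t'" if "\<And>s. s \<in> L - {t, t'} \<Longrightarrow> h s = 1" for h :: "_ \<Rightarrow> real"
    using fin t that by (subst split_L) (simp add: prod.insert_remove insert_Diff_if prod.neutral)
  have "measure_pmf.expectation (Pi_pmf L d (\<lambda>_. G)) (\<lambda>r. \<Prod>s\<in>L. F s (r s))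
      = (\<Prod>s\<in>L. measure_pmf.expectation G (F s))"
    by (rule expectation_prod_Pi_pmf[OF fin])
       (auto simp: F_def nonneg integrable_measure_pmf_finite[OF fin_G])
  moreover have "(\<Prod>s\<in>L. F s (r s)) = \<phi> (r t) * \<psi> (r t')" for r
    using t by (subst prod_two) (auto simp: F_def)
  moreover have "(\<Prod>s\<in>L. measure_pmf.expectation G (F s)) = measure_pmf.expectation G \<phi> * measure_pmf.expectation G \<psi>"
    using t by (subst prod_two) (auto simp: F_def)
  ultimately show ?thesis by simp
qed

subsection \<open>Bonferroni's inequality\<close>

lemma bonferroni:
  assumes "finite T"
  shows "of_bool (\<exists>t\<in>T. e t) \<ge> (\<Sum>t\<in>T. of_bool (e t)) - (\<Sum>t\<in>T. \<Sum>t'\<in>T - {t}. of_bool (e t) * of_bool (e t') :: real)"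
proof -
  define E where "E = {t\<in>T. e t}"
  have fin_E: "finite E" using assms by (simp add: E_def)
  have first: "(\<Sum>t\<in>T. of_bool (e t) :: real) = card E"
    using assms by (simp add: E_def Int_def conj_commute)
  have "(\<Sum>t\<in>T. \<Sum>t'\<in>T - {t}. of_bool (e t) * of_bool (e t') :: real)
      = (\<Sum>t\<in>T. if e t then real (card (E - {t})) else 0)"
  proof (intro sum.cong refl)
    fix t assume "t \<in> T"
    have "(T - {t}) \<inter> {t'. e t'} = E - {t}" by (auto simp: E_def)
    then show "(\<Sum>t'\<in>T - {t}. of_bool (e t) * of_bool (e t') :: real) = (if e t then real (card (E - {t})) else 0)"
      using assms by simp
  qed
  also have "\<dots> = (\<Sum>t\<in>E. real (card E - 1))"
    unfolding E_def using assms by (simp add: sum.inter_filter[symmetric])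
  finally have second: "(\<Sum>t\<in>T. \<Sum>t'\<in>T - {t}. of_bool (e t) * of_bool (e t') :: real) = real (card E) * real (card E - 1)"
    by simp
  have "(\<exists>t\<in>T. e t) \<longleftrightarrow> card E > 0" using fin_E by (auto simp: E_def card_gt_0_iff)
  then show ?thesis
    unfolding first second by (cases "card E") (auto simp: algebra_simps)
qed

lemma expectation_exists_lower:
  fixes e :: "'t \<Rightarrow> 'r \<Rightarrow> bool"
  assumes fin: "finite T" "finite (set_pmf M)"
  shows "measure_pmf.expectation M (\<lambda>r. of_bool (\<exists>t\<in>T. e t r))
    \<ge> (\<Sum>t\<in>T. measure_pmf.expectation M (\<lambda>r. of_bool (e t r)))
       - (\<Sum>t\<in>T. \<Sum>t'\<in>T - {t}. measure_pmf.expectation M (\<lambda>r. of_bool (e t r) * of_bool (e t' r)) :: real)"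
proof -
  note integrable = integrable_measure_pmf_finite[OF fin(2)]
  have "measure_pmf.expectation M (\<lambda>r. of_bool (\<exists>t\<in>T. e t r))
      \<ge> measure_pmf.expectation M (\<lambda>r. (\<Sum>t\<in>T. of_bool (e t r))
           - (\<Sum>t\<in>T. \<Sum>t'\<in>T - {t}. of_bool (e t r) * of_bool (e t' r)) :: real)"
    by (intro integral_mono integrable bonferroni fin)
  then show ?thesis
    by (simp add: integrable Bochner_Integration.integral_diff Bochner_Integration.integral_sum
        del: sum_of_bool_eq)
qed

section \<open>Compressing a protocol into a solution of the linear program\<close>

text \<open>Fix a protocol \<open>\<pi>\<close> with error at most \<open>\<epsilon>\<close> on \<open>\<mu>\<close> and parameters \<open>k > 0\<close>, \<open>n > 0\<close>;
  write \<open>K = 2 powr k\<close> and \<open>\<rho> = \<delta> / K\<^sup>2\<close>.  Shared randomness assigns to every transcript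
  \<open>t\<close> an independent uniform grid point \<open>(i, j) \<in> [n]\<^sup>2\<close>.  Alice accepts \<open>t\<close> on \<open>x\<close> if
  \<open>i/n \<le> \<rho> qA t x\<close> and \<open>j/n \<le> min 1 (K wB t x / pX x)\<close>, the second test using her
  prior estimate of Bob's factor; symmetrically Bob accepts \<open>t\<close> on \<open>y\<close> if \<open>j/n \<le> qB t y\<close>
  and \<open>i/n \<le> \<rho> min 1 (K wA t y / pY y)\<close>.  For every output \<open>z\<close> the random rectangle
  \<open>rect r z\<close> consists of the inputs accepting some transcript with output \<open>z\<close>, and
  \<open>p R z = Pr[rect r z = R] / |Z|\<close>.  On typical transcripts the estimated tests agree with
  the true ones, so every correct transcript covers \<open>(x, y)\<close> with probability about
  \<open>\<rho> Pr[t | x, y]\<close>, while the total coverage of any input is at most \<open>\<rho> + (\<rho> K)\<^sup>2 = \<rho> (1 + \<delta>)\<close>.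
  Hence \<open>p\<close> is a feasible point of the linear program for error \<open>\<epsilon> + 3 \<delta>\<close> with value
  \<open>\<eta> = \<rho> (1 + \<delta>) / |Z|\<close>, provided \<open>IC\<close> is small compared to \<open>k\<close> and \<open>n\<close> is large.\<close>

lemma finite_rects: "finite X \<Longrightarrow> finite Y \<Longrightarrow> finite (rects X Y)"
proof -
  assume "finite X" "finite Y"
  moreover have "rects X Y = (\<lambda>(A, B). A \<times> B) ` (Pow X \<times> Pow Y)" by (auto simp: rects_def)
  ultimately show ?thesis by simp
qed

locale compression =
  fixes X :: "'x set" and Y :: "'y set" and Z :: "'z set" and S :: "('x \<times> 'y) set" and f :: "'x \<Rightarrow> 'y \<Rightarrow> 'z"
    and \<mu> :: "('x \<times> 'y) pmf" and \<pi> :: "('x, 'y, 'z) proto" and \<epsilon> \<delta> k :: real and n :: nat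
  assumes finite_X: "finite X" and finite_Y: "finite Y" and finite_Z: "finite Z" and Z_nonempty: "Z \<noteq> {}"
    and S_subset: "S \<subseteq> X \<times> Y" and f_S: "\<And>x y. (x, y) \<in> S \<Longrightarrow> f x y \<in> Z"
    and support: "set_pmf \<mu> \<subseteq> X \<times> Y" and outputs_Z: "outputs \<pi> \<subseteq> Z"
    and error: "err_dist S f \<pi> \<mu> \<le> \<epsilon>" and eps_nonneg: "\<epsilon> \<ge> 0"
    and delta_pos: "\<delta> > 0" and delta_half: "\<delta> < 1/2" and k_pos: "k > 0"
    and IC_small: "(IC \<pi> \<mu> + 4) / k \<le> \<delta> / 2"
    and n_pos: "n > 0" and n_large: "4 * real (card (leaves \<pi>)) \<le> real n * (\<delta> / (2 powr k)\<^sup>2) * \<delta>"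
begin

abbreviation "L \<equiv> leaves \<pi>"
abbreviation "mX \<equiv> pX \<mu> Y"
abbreviation "mY \<equiv> pY \<mu> X"
abbreviation "SA \<equiv> wA \<mu> X \<pi>"
abbreviation "SB \<equiv> wB \<mu> Y \<pi>"

definition "K = 2 powr k"
definition "rho = \<delta> / K\<^sup>2"
abbreviation "good \<equiv> typical X Y \<mu> \<pi> K"

definition "aA t x = rho * qA \<pi> t x"
definition "bA t x = min 1 (K * SB t x / mX x)"
definition "aB t y = rho * min 1 (K * SA t y / mY y)"
definition "bB t y = qB \<pi> t y"
definition "accA t g x \<longleftrightarrow> real (fst g) / real n \<le> aA t x \<and> real (snd g) / real n \<le> bA t x"
definition "accB t g y \<longleftrightarrow> real (snd g) / real n \<le> bB t y \<and> real (fst g) / real n \<le> aB t y"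

definition "grid = pmf_of_set ({1..n} \<times> {1..n})"
definition "samples = Pi_pmf L (1, 1) (\<lambda>_. grid)"

definition "setA r z = {x\<in>X. \<exists>t\<in>L. snd t = z \<and> accA t (r t) x}"
definition "setB r z = {y\<in>Y. \<exists>t\<in>L. snd t = z \<and> accB t (r t) y}"
definition "rect r z = setA r z \<times> setB r z"
definition "p R z = (measure_pmf.expectation samples (\<lambda>r. of_bool (rect r z = R)) / card Z :: real)"
definition "eta = rho * (1 + \<delta>) / card Z"

definition "EA t x = (measure_pmf.expectation grid (\<lambda>g. of_bool (accA t g x)) :: real)"
definition "EB t y = (measure_pmf.expectation grid (\<lambda>g. of_bool (accB t g y)) :: real)"
definition "Eboth t x y = (measure_pmf.expectation grid (\<lambda>g. of_bool (accA t g x \<and> accB t g y)) :: real)"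

lemma K_ge_1: "K \<ge> 1"
  unfolding K_def using k_pos by (intro ge_one_powr_ge_zero) auto

lemma K_pos: "K > 0"
  using K_ge_1 by simp

lemma rho_pos: "rho > 0"
  unfolding rho_def using delta_pos K_pos by simp

lemma rho_le_delta: "rho \<le> \<delta>"
  unfolding rho_def using delta_pos K_ge_1 by (simp add: divide_le_eq field_simps)

lemma rho_le_1: "rho \<le> 1"
  using rho_le_delta delta_half by simp

lemma finite_set_samples: "finite (set_pmf samples)"
proof -
  have "finite (set_pmf grid)" unfolding grid_def using n_pos by simp
  then show ?thesis
    unfolding samples_def by (simp add: set_Pi_pmf finite_leaves) (intro finite_PiE_dflt finite_leaves)
qed

lemma integrable_samples: "integrable (measure_pmf samples) (h :: _ \<Rightarrow> real)"
  by (rule integrable_measure_pmf_finite[OF finite_set_samples])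

lemma E_one_samples:
  "t \<in> L \<Longrightarrow> measure_pmf.expectation samples (\<lambda>r. \<phi> (r t)) = (measure_pmf.expectation grid \<phi> :: real)"
  unfolding samples_def by (rule expectation_Pi_pmf_one[OF finite_leaves])

lemma E_two_samples:
  assumes "t \<in> L" "t' \<in> L" "t \<noteq> t'" "\<And>v. \<phi> v \<ge> 0" "\<And>v. \<psi> v \<ge> 0"
  shows "measure_pmf.expectation samples (\<lambda>r. \<phi> (r t) * \<psi> (r t'))
           = measure_pmf.expectation grid \<phi> * (measure_pmf.expectation grid \<psi> :: real)"
  unfolding samples_def using n_pos
  by (intro expectation_Pi_pmf_two[OF finite_leaves assms(1-3) _ assms(4,5)]) (simp add: grid_def)

lemma E_sum_samples:
  "finite I \<Longrightarrow> measure_pmf.expectation samples (\<lambda>r. \<Sum>i\<in>I. h i r) = (\<Sum>i\<in>I. measure_pmf.expectation samples (h i) :: real)"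
  by (rule Bochner_Integration.integral_sum) (rule integrable_samples)

lemma thresholds_range:
  "0 \<le> aA t x" "aA t x \<le> 1" "0 \<le> bA t x" "bA t x \<le> 1"
  "0 \<le> aB t y" "aB t y \<le> 1" "0 \<le> bB t y" "bB t y \<le> 1"
proof -
  have nonneg: "mX x \<ge> 0" "mY y \<ge> 0" "SA t y \<ge> 0" "SB t x \<ge> 0"
    by (auto simp: pX_def pY_def wA_def wB_def intro!: sum_nonneg mult_nonneg_nonneg qA_nonneg qB_nonneg)
  show "0 \<le> aA t x" "aA t x \<le> 1"
    unfolding aA_def using rho_pos rho_le_1 qA_nonneg[of \<pi> t x] qA_le_1[of \<pi> t x] by (auto intro: mult_le_one)
  show "0 \<le> bA t x" "bA t x \<le> 1"
    unfolding bA_def using K_pos nonneg by auto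
  show "0 \<le> aB t y" "aB t y \<le> 1"
    unfolding aB_def using rho_pos rho_le_1 K_pos nonneg by (auto intro!: mult_le_one)
  show "0 \<le> bB t y" "bB t y \<le> 1"
    unfolding bB_def using qB_nonneg[of \<pi> t y] qB_le_1[of \<pi> t y] by auto
qed

lemma EA_eq: "EA t x = grid_frac n (aA t x) * grid_frac n (bA t x)"
  unfolding EA_def grid_def accA_def by (rule expectation_grid_pair[OF n_pos])

lemma EB_eq: "EB t y = grid_frac n (aB t y) * grid_frac n (bB t y)"
proof -
  have "EB t y = measure_pmf.expectation (pmf_of_set ({1..n} \<times> {1..n}))
     (\<lambda>g. of_bool (real (fst g) / real n \<le> aB t y \<and> real (snd g) / real n \<le> bB t y))"
    unfolding EB_def grid_def accB_def by (simp add: conj_commute)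
  then show ?thesis by (simp only: expectation_grid_pair[OF n_pos])
qed

lemma Eboth_eq: "Eboth t x y = grid_frac n (min (aA t x) (aB t y)) * grid_frac n (min (bA t x) (bB t y))"
proof -
  have "Eboth t x y = measure_pmf.expectation (pmf_of_set ({1..n} \<times> {1..n}))
     (\<lambda>g. of_bool (real (fst g) / real n \<le> min (aA t x) (aB t y) \<and> real (snd g) / real n \<le> min (bA t x) (bB t y)))"
    unfolding Eboth_def grid_def accA_def accB_def by (intro arg_cong[where f="measure_pmf.expectation _"] ext) auto
  then show ?thesis by (simp only: expectation_grid_pair[OF n_pos])
qed

lemma EA_le: "EA t x \<le> aA t x * bA t x"
  unfolding EA_eq using thresholds_range grid_frac_nonneg by (intro mult_mono grid_frac_upper) auto

lemma EB_le: "EB t y \<le> aB t y * bB t y"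
  unfolding EB_eq using thresholds_range grid_frac_nonneg by (intro mult_mono grid_frac_upper) auto

lemma EA_nonneg: "EA t x \<ge> 0" by (simp add: EA_eq grid_frac_nonneg)
lemma EB_nonneg: "EB t y \<ge> 0" by (simp add: EB_eq grid_frac_nonneg)
lemma Eboth_nonneg: "Eboth t x y \<ge> 0" by (simp add: Eboth_eq grid_frac_nonneg)

lemma Eboth_le: "Eboth t x y \<le> rho * qA \<pi> t x * qB \<pi> t y"
proof -
  have "Eboth t x y \<le> min (aA t x) (aB t y) * min (bA t x) (bB t y)"
    unfolding Eboth_eq using thresholds_range grid_frac_nonneg by (intro mult_mono grid_frac_upper) auto
  also have "\<dots> \<le> aA t x * bB t y"
    using thresholds_range by (intro mult_mono) auto
  finally show ?thesis by (simp add: aA_def bB_def mult_ac)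
qed

lemma support_point:
  assumes "pmf \<mu> (x, y) > 0"
  shows "x \<in> X" "y \<in> Y" "mX x > 0" "mY y > 0"
proof -
  have "(x, y) \<in> set_pmf \<mu>" using assms by (simp add: set_pmf_eq)
  then have "(x, y) \<in> X \<times> Y" using support by auto
  then show "x \<in> X" "y \<in> Y" by auto
  have "pmf \<mu> (x, y) \<le> mX x" "pmf \<mu> (x, y) \<le> mY y"
    unfolding pX_def pY_def using \<open>x \<in> X\<close> \<open>y \<in> Y\<close> finite_X finite_Y by (auto intro!: member_le_sum)
  then show "mX x > 0" "mY y > 0" using assms by auto
qed

lemma Eboth_lower:
  assumes "pmf \<mu> (x, y) > 0"
  shows "Eboth t x y \<ge> rho * qA \<pi> t x * qB \<pi> t y * of_bool (good t x y) - 2 / n"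
proof -
  note pos = support_point[OF assms]
  have "Eboth t x y \<ge> min (aA t x) (aB t y) * min (bA t x) (bB t y) - 2 / n"
    unfolding Eboth_eq using thresholds_range(1-4)[of t x] thresholds_range(5-8)[of t y] n_pos by (intro grid_frac_product_lower) auto
  moreover have "min (aA t x) (aB t y) * min (bA t x) (bB t y) \<ge> rho * qA \<pi> t x * qB \<pi> t y * of_bool (good t x y)"
  proof (cases "good t x y")
    case True
    then have "qA \<pi> t x \<le> K * SA t y / mY y" and "qB \<pi> t y \<le> K * SB t x / mX x"
      using pos by (auto simp: typical_def field_simps)
    then have "aA t x \<le> aB t y" "bB t y \<le> bA t x"
      unfolding aA_def aB_def bA_def bB_def using qA_le_1[of \<pi> t x] qB_le_1[of \<pi> t y] rho_pos
      by (auto intro: mult_left_mono)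
    then show ?thesis using True by (simp add: aA_def bB_def min_def mult_ac)
  qed (use thresholds_range(1-4)[of t x] thresholds_range(5-8)[of t y] in simp)
  ultimately show ?thesis by linarith
qed

lemma sum_qA_SB: "(\<Sum>t\<in>L. qA \<pi> t x * SB t x) = mX x"
proof -
  have "(\<Sum>t\<in>L. qA \<pi> t x * SB t x) = (\<Sum>y\<in>Y. pmf \<mu> (x, y) * (\<Sum>t\<in>L. qA \<pi> t x * qB \<pi> t y))"
    unfolding wB_def by (simp add: sum_distrib_left sum.swap[of _ L Y] mult_ac)
  then show ?thesis by (simp add: sum_qA_qB pX_def)
qed

lemma sum_SA_qB: "(\<Sum>t\<in>L. SA t y * qB \<pi> t y) = mY y"
proof -
  have "(\<Sum>t\<in>L. SA t y * qB \<pi> t y) = (\<Sum>x\<in>X. pmf \<mu> (x, y) * (\<Sum>t\<in>L. qA \<pi> t x * qB \<pi> t y))"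
    unfolding wA_def by (simp add: sum_distrib_left sum_distrib_right sum.swap[of _ L X] mult_ac)
  then show ?thesis by (simp add: sum_qA_qB pY_def)
qed

text \<open>In expectation each player accepts at most \<open>\<rho> K\<close> transcripts; this is where the
  estimates \<open>wA\<close>, \<open>wB\<close> of the other player's factor sum to the marginals.\<close>
lemma sum_EA: "(\<Sum>t\<in>L. EA t x) \<le> rho * K"
proof (cases "mX x = 0")
  case True
  then have "EA t x \<le> 0" for t using EA_le[of t x] by (simp add: bA_def)
  then have "(\<Sum>t\<in>L. EA t x) \<le> 0" by (intro sum_nonpos) auto
  then show ?thesis using rho_pos K_pos by (smt (verit) mult_pos_pos)
next
  case False
  have "EA t x \<le> rho * K / mX x * (qA \<pi> t x * SB t x)" for t
  proof -
    have "EA t x \<le> aA t x * bA t x" by (rule EA_le)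
    also have "\<dots> \<le> rho * qA \<pi> t x * (K * SB t x / mX x)"
      unfolding aA_def bA_def using rho_pos qA_nonneg[of \<pi> t x] by (intro mult_left_mono) auto
    finally show ?thesis by (simp add: field_simps)
  qed
  then have "(\<Sum>t\<in>L. EA t x) \<le> rho * K / mX x * (\<Sum>t\<in>L. qA \<pi> t x * SB t x)"
    unfolding sum_distrib_left by (intro sum_mono)
  then show ?thesis using False by (simp add: sum_qA_SB)
qed

lemma sum_EB: "(\<Sum>t\<in>L. EB t y) \<le> rho * K"
proof (cases "mY y = 0")
  case True
  then have "EB t y \<le> 0" for t using EB_le[of t y] by (simp add: aB_def)
  then have "(\<Sum>t\<in>L. EB t y) \<le> 0" by (intro sum_nonpos) auto
  then show ?thesis using rho_pos K_pos by (smt (verit) mult_pos_pos)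
next
  case False
  have "EB t y \<le> rho * K / mY y * (SA t y * qB \<pi> t y)" for t
  proof -
    have "EB t y \<le> aB t y * bB t y" by (rule EB_le)
    also have "\<dots> \<le> rho * (K * SA t y / mY y) * qB \<pi> t y"
      unfolding aB_def bB_def using rho_pos qB_nonneg[of \<pi> t y] by (intro mult_right_mono mult_left_mono) auto
    finally show ?thesis by (simp add: field_simps)
  qed
  then have "(\<Sum>t\<in>L. EB t y) \<le> rho * K / mY y * (\<Sum>t\<in>L. SA t y * qB \<pi> t y)"
    unfolding sum_distrib_left by (intro sum_mono)
  then show ?thesis using False by (simp add: sum_SA_qB)
qed

lemma sum_Eboth: "(\<Sum>t\<in>L. Eboth t x y) \<le> rho"
proof -
  have "(\<Sum>t\<in>L. Eboth t x y) \<le> (\<Sum>t\<in>L. rho * (qA \<pi> t x * qB \<pi> t y))"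
    by (intro sum_mono) (simp add: Eboth_le mult.assoc[symmetric])
  also have "\<dots> = rho" by (simp add: sum_distrib_left[symmetric] sum_qA_qB)
  finally show ?thesis .
qed

lemma err_pt_as_sum:
  "err_pt S f \<pi> x y = (\<Sum>t\<in>L. qA \<pi> t x * qB \<pi> t y * of_bool ((x, y) \<in> S \<and> snd t \<noteq> f x y))"
proof (cases "(x, y) \<in> S")
  case True
  have "err_pt S f \<pi> x y = (\<Sum>t\<in>L. if t \<in> {t. snd t \<noteq> f x y} then pmf (run \<pi> x y) t else 0)"
    using True by (simp add: err_pt_def prob_finite_support[OF finite_leaves set_run_leaves])
  then show ?thesis using True by (simp add: run_factorization of_bool_def if_distrib cong: if_cong)
qed (simp add: err_pt_def)

lemma leaf_output: "t \<in> L \<Longrightarrow> snd t \<in> Z"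
  using leaves_outputs outputs_Z by blast

lemma sum_output_indicator: "t \<in> L \<Longrightarrow> (\<Sum>z\<in>Z. of_bool (snd t = z) :: real) = 1"
proof -
  assume "t \<in> L"
  then have "Z \<inter> {z. snd t = z} = {snd t}" using leaf_output by auto
  then show ?thesis using finite_Z by simp
qed

subsection \<open>Upper bound on the coverage of an input\<close>

lemma cover_count_le:
  "(\<Sum>z\<in>Z. of_bool (x \<in> setA r z \<and> y \<in> setB r z) :: real)
     \<le> (\<Sum>t\<in>L. \<Sum>t'\<in>L. of_bool (accA t (r t) x) * of_bool (accB t' (r t') y))"
proof -
  define h where "h t = (of_bool (accA t (r t) x) * (\<Sum>t'\<in>L. of_bool (accB t' (r t') y)) :: real)" for t
  have h_nonneg: "h t \<ge> 0" for t unfolding h_def by (intro mult_nonneg_nonneg sum_nonneg) auto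
  have each: "of_bool (x \<in> setA r z \<and> y \<in> setB r z) \<le> (\<Sum>t\<in>L. of_bool (snd t = z) * h t)" for z
  proof (cases "x \<in> setA r z \<and> y \<in> setB r z")
    case True
    then obtain t0 t1 where t0: "t0 \<in> L" "snd t0 = z" "accA t0 (r t0) x" and t1: "t1 \<in> L" "accB t1 (r t1) y"
      by (auto simp: setA_def setB_def)
    have "(1::real) \<le> (\<Sum>t'\<in>L. of_bool (accB t' (r t') y))"
      using member_le_sum[of t1 L "\<lambda>t'. of_bool (accB t' (r t') y) :: real"] t1 finite_leaves[of \<pi>]
      by (simp del: sum_of_bool_eq)
    then have "1 \<le> of_bool (snd t0 = z) * h t0" using t0 by (simp add: h_def)
    also have "\<dots> \<le> (\<Sum>t\<in>L. of_bool (snd t = z) * h t)"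
      using t0 finite_leaves[of \<pi>] h_nonneg by (intro member_le_sum) auto
    finally show ?thesis using True by simp
  next
    case False
    then have "of_bool (x \<in> setA r z \<and> y \<in> setB r z) = (0::real)" by simp
    moreover have "0 \<le> (\<Sum>t\<in>L. of_bool (snd t = z) * h t)" by (intro sum_nonneg) (simp add: h_nonneg)
    ultimately show ?thesis by linarith
  qed
  have "(\<Sum>z\<in>Z. of_bool (x \<in> setA r z \<and> y \<in> setB r z) :: real) \<le> (\<Sum>z\<in>Z. \<Sum>t\<in>L. of_bool (snd t = z) * h t)"
    by (intro sum_mono each)
  also have "\<dots> = (\<Sum>t\<in>L. (\<Sum>z\<in>Z. of_bool (snd t = z)) * h t)"
    by (simp add: sum.swap[of _ Z L] sum_distrib_right)
  also have "\<dots> = (\<Sum>t\<in>L. h t)" by (intro sum.cong refl) (simp add: sum_output_indicator)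
  finally show ?thesis by (simp add: h_def sum_distrib_left)
qed

text \<open>Distinct transcripts use independent grid points.\<close>
lemma expectation_accept_pair:
  assumes "t \<in> L" "t' \<in> L"
  shows "measure_pmf.expectation samples (\<lambda>r. of_bool (accA t (r t) x) * of_bool (accB t' (r t') y))
      \<le> of_bool (t = t') * Eboth t x y + EA t x * EB t' y"
proof (cases "t = t'")
  case True
  have "measure_pmf.expectation samples (\<lambda>r. of_bool (accA t (r t) x) * of_bool (accB t' (r t') y))
     = (measure_pmf.expectation samples (\<lambda>r. (\<lambda>g. of_bool (accA t g x \<and> accB t g y)) (r t)) :: real)"
    using True by (simp only: of_bool_conj)
  also have "\<dots> = Eboth t x y" unfolding Eboth_def by (rule E_one_samples[OF assms(1)])
  finally show ?thesis using True EA_nonneg[of t x] EB_nonneg[of t' y] by simp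
next
  case False
  have "(measure_pmf.expectation samples (\<lambda>r. (\<lambda>g. of_bool (accA t g x)) (r t) * (\<lambda>g. of_bool (accB t' g y)) (r t')) :: real)
      = EA t x * EB t' y"
    unfolding EA_def EB_def by (rule E_two_samples[OF assms False]) auto
  then show ?thesis using False by simp
qed

lemma coverage_upper:
  "(\<Sum>z\<in>Z. measure_pmf.expectation samples (\<lambda>r. of_bool (x \<in> setA r z \<and> y \<in> setB r z)) :: real)
     \<le> rho + (rho * K)\<^sup>2"
proof -
  have "(\<Sum>z\<in>Z. measure_pmf.expectation samples (\<lambda>r. of_bool (x \<in> setA r z \<and> y \<in> setB r z)) :: real)
      \<le> measure_pmf.expectation samples (\<lambda>r. \<Sum>t\<in>L. \<Sum>t'\<in>L. of_bool (accA t (r t) x) * of_bool (accB t' (r t') y))"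
    unfolding E_sum_samples[OF finite_Z, symmetric] by (intro integral_mono integrable_samples cover_count_le)
  also have "\<dots> = (\<Sum>t\<in>L. \<Sum>t'\<in>L. measure_pmf.expectation samples (\<lambda>r. of_bool (accA t (r t) x) * of_bool (accB t' (r t') y)))"
    unfolding E_sum_samples[OF finite_leaves] by (intro sum.cong refl E_sum_samples[OF finite_leaves])
  also have "\<dots> \<le> (\<Sum>t\<in>L. \<Sum>t'\<in>L. of_bool (t = t') * Eboth t x y + EA t x * EB t' y)"
    by (intro sum_mono expectation_accept_pair)
  also have "\<dots> = (\<Sum>t\<in>L. Eboth t x y) + (\<Sum>t\<in>L. EA t x) * (\<Sum>t'\<in>L. EB t' y)"
  proof -
    have "(\<Sum>t'\<in>L. of_bool (t = t') * Eboth t x y) = Eboth t x y" if "t \<in> L" for t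
    proof -
      have "(\<Sum>t'\<in>L. of_bool (t = t') * Eboth t x y) = (\<Sum>t'\<in>L. if t = t' then Eboth t x y else 0)"
        by (intro sum.cong refl) auto
      then show ?thesis using that finite_leaves[of \<pi>] by (simp add: sum.delta)
    qed
    then show ?thesis by (simp add: sum.distrib sum_product)
  qed
  also have "\<dots> \<le> rho + (rho * K) * (rho * K)"
    using sum_Eboth sum_EA sum_EB rho_pos K_pos
    by (intro add_mono mult_mono) (auto intro: sum_nonneg EA_nonneg EB_nonneg)
  finally show ?thesis by (simp add: power2_eq_square)
qed

subsection \<open>Lower bound on the correct coverage of an input\<close>

text \<open>The quantity counted by constraint (i) of the linear program: on valid inputs the
  rectangle for the correct value, elsewhere the rectangles for all values.\<close>
definition cover where
  "cover r x y = (if (x, y) \<in> S then of_bool (x \<in> setA r (f x y) \<and> y \<in> setB r (f x y))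
                  else (\<Sum>z\<in>Z. of_bool (x \<in> setA r z \<and> y \<in> setB r z)) :: real)"

definition "bad x y = (\<Sum>t\<in>L. qA \<pi> t x * qB \<pi> t y * of_bool (\<not> good t x y))"

definition "correct x y = {t\<in>L. (x, y) \<in> S \<longrightarrow> snd t = f x y}"

lemma cover_ge_exists:
  assumes "x \<in> X" "y \<in> Y"
  shows "cover r x y \<ge> of_bool (\<exists>t\<in>correct x y. accA t (r t) x \<and> accB t (r t) y)"
proof (cases "\<exists>t\<in>correct x y. accA t (r t) x \<and> accB t (r t) y")
  case True
  then obtain t where t: "t \<in> L" "(x, y) \<in> S \<longrightarrow> snd t = f x y" "accA t (r t) x" "accB t (r t) y"
    by (auto simp: correct_def)
  have mem: "x \<in> setA r (snd t) \<and> y \<in> setB r (snd t)" using t assms by (auto simp: setA_def setB_def)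
  moreover have "of_bool (x \<in> setA r (snd t) \<and> y \<in> setB r (snd t)) \<le> (\<Sum>z\<in>Z. of_bool (x \<in> setA r z \<and> y \<in> setB r z) :: real)"
    using leaf_output[OF t(1)] finite_Z by (intro member_le_sum) auto
  ultimately show ?thesis using t True by (auto simp: cover_def)
qed (auto simp: cover_def intro: sum_nonneg simp del: sum_of_bool_eq)

lemma sum_pairs_Eboth_le:
  assumes "T \<subseteq> L"
  shows "(\<Sum>t\<in>T. \<Sum>t'\<in>T - {t}. Eboth t x y * Eboth t' x y) \<le> rho\<^sup>2"
proof -
  have "(\<Sum>t\<in>T. \<Sum>t'\<in>T - {t}. Eboth t x y * Eboth t' x y) \<le> (\<Sum>t\<in>T. \<Sum>t'\<in>L. Eboth t x y * Eboth t' x y)"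
    using assms by (intro sum_mono sum_mono2 finite_leaves) (auto intro: mult_nonneg_nonneg Eboth_nonneg)
  also have "\<dots> \<le> (\<Sum>t\<in>L. \<Sum>t'\<in>L. Eboth t x y * Eboth t' x y)"
    using assms by (intro sum_mono2 finite_leaves) (auto intro!: sum_nonneg mult_nonneg_nonneg Eboth_nonneg)
  also have "\<dots> = (\<Sum>t\<in>L. Eboth t x y) * (\<Sum>t\<in>L. Eboth t x y)" by (simp add: sum_product)
  also have "\<dots> \<le> rho * rho"
    using sum_Eboth[of x y] rho_pos by (intro mult_mono) (auto intro: sum_nonneg Eboth_nonneg)
  finally show ?thesis by (simp add: power2_eq_square)
qed

lemma sum_correct_Eboth_lower:
  assumes "pmf \<mu> (x, y) > 0"
  shows "(\<Sum>t\<in>correct x y. Eboth t x y) \<ge> rho * (1 - err_pt S f \<pi> x y - bad x y) - 2 * card L / n"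
proof -
  have sub: "correct x y \<subseteq> L" by (auto simp: correct_def)
  have "(\<Sum>t\<in>correct x y. qA \<pi> t x * qB \<pi> t y * of_bool (good t x y))
      = (\<Sum>t\<in>L. if (x, y) \<in> S \<longrightarrow> snd t = f x y then qA \<pi> t x * qB \<pi> t y * of_bool (good t x y) else 0)"
    unfolding correct_def by (rule sum.inter_filter[OF finite_leaves])
  also have "\<dots> \<ge> (\<Sum>t\<in>L. qA \<pi> t x * qB \<pi> t y * (1 - of_bool ((x, y) \<in> S \<and> snd t \<noteq> f x y) - of_bool (\<not> good t x y)))"
    by (intro sum_mono) (auto simp: qA_nonneg qB_nonneg)
  also have "(\<Sum>t\<in>L. qA \<pi> t x * qB \<pi> t y * (1 - of_bool ((x, y) \<in> S \<and> snd t \<noteq> f x y) - of_bool (\<not> good t x y)))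
      = 1 - err_pt S f \<pi> x y - bad x y"
    by (simp add: algebra_simps sum_subtractf sum.distrib sum_qA_qB err_pt_as_sum bad_def)
  finally have "rho * (1 - err_pt S f \<pi> x y - bad x y) \<le> rho * (\<Sum>t\<in>correct x y. qA \<pi> t x * qB \<pi> t y * of_bool (good t x y))"
    using rho_pos by (intro mult_left_mono) auto
  also have "\<dots> = (\<Sum>t\<in>correct x y. rho * qA \<pi> t x * qB \<pi> t y * of_bool (good t x y) - 2 / n) + 2 * card (correct x y) / n"
    by (simp add: sum_subtractf sum_distrib_left mult_ac)
  also have "\<dots> \<le> (\<Sum>t\<in>correct x y. Eboth t x y) + 2 * card L / n"
    using sub by (intro add_mono sum_mono Eboth_lower[OF assms] divide_right_mono) (auto intro: card_mono finite_leaves)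
  finally show ?thesis by simp
qed

text \<open>By Bonferroni's inequality, the correct coverage of \<open>(x, y)\<close> is at least the sum of
  the acceptance probabilities of the correct transcripts minus the pairwise terms.\<close>
lemma coverage_lower:
  assumes pos: "pmf \<mu> (x, y) > 0"
  shows "measure_pmf.expectation samples (\<lambda>r. cover r x y)
           \<ge> rho * (1 - err_pt S f \<pi> x y - bad x y) - 2 * card L / n - rho\<^sup>2"
proof -
  define e where "e t r \<longleftrightarrow> accA t (r t) x \<and> accB t (r t) y" for t and r :: "bool list \<times> 'z \<Rightarrow> nat \<times> nat"
  have sub: "correct x y \<subseteq> L" by (auto simp: correct_def)
  have single: "measure_pmf.expectation samples (\<lambda>r. of_bool (e t r)) = Eboth t x y" if "t \<in> L" for t
    unfolding e_def Eboth_def using E_one_samples[OF that, of "\<lambda>g. of_bool (accA t g x \<and> accB t g y)"] by simp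
  have pair: "measure_pmf.expectation samples (\<lambda>r. of_bool (e t r) * of_bool (e t' r)) = Eboth t x y * Eboth t' x y"
    if "t \<in> L" "t' \<in> L" "t \<noteq> t'" for t t'
    unfolding e_def Eboth_def
    using E_two_samples[OF that, of "\<lambda>g. of_bool (accA t g x \<and> accB t g y)" "\<lambda>g. of_bool (accA t' g x \<and> accB t' g y)"]
    by simp
  have "measure_pmf.expectation samples (\<lambda>r. cover r x y)
      \<ge> measure_pmf.expectation samples (\<lambda>r. of_bool (\<exists>t\<in>correct x y. e t r))"
    unfolding e_def using support_point[OF pos] by (intro integral_mono integrable_samples cover_ge_exists)
  moreover have "measure_pmf.expectation samples (\<lambda>r. of_bool (\<exists>t\<in>correct x y. e t r))
      \<ge> (\<Sum>t\<in>correct x y. Eboth t x y) - (\<Sum>t\<in>correct x y. \<Sum>t'\<in>correct x y - {t}. Eboth t x y * Eboth t' x y)"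
  proof -
    have "(\<Sum>t\<in>correct x y. measure_pmf.expectation samples (\<lambda>r. of_bool (e t r))) = (\<Sum>t\<in>correct x y. Eboth t x y)"
      using sub by (intro sum.cong refl single) auto
    moreover have "(\<Sum>t\<in>correct x y. \<Sum>t'\<in>correct x y - {t}. measure_pmf.expectation samples (\<lambda>r. of_bool (e t r) * of_bool (e t' r)))
        = (\<Sum>t\<in>correct x y. \<Sum>t'\<in>correct x y - {t}. Eboth t x y * Eboth t' x y)"
      using sub by (intro sum.cong refl pair) auto
    ultimately show ?thesis
      using expectation_exists_lower[OF finite_subset[OF sub finite_leaves] finite_set_samples, of e] by simp
  qed
  ultimately show ?thesis
    using sum_pairs_Eboth_le[OF sub, of x y] sum_correct_Eboth_lower[OF pos] by linarith
qed

subsection \<open>Feasibility of the constructed solution\<close>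

lemma rect_in_rects: "rect r z \<in> rects X Y"
  unfolding rect_def rects_def setA_def setB_def by blast

lemma p_nonneg: "p R z \<ge> 0"
  unfolding p_def by (intro divide_nonneg_nonneg Bochner_Integration.integral_nonneg) auto

lemma sum_p: "finite A \<Longrightarrow> (\<Sum>R\<in>A. p R z) = measure_pmf.expectation samples (\<lambda>r. of_bool (rect r z \<in> A)) / card Z"
proof -
  assume fin: "finite A"
  have "(\<Sum>R\<in>A. of_bool (rect r z = R) :: real) = of_bool (rect r z \<in> A)" for r
  proof -
    have "A \<inter> {R. rect r z = R} = (if rect r z \<in> A then {rect r z} else {})" by auto
    then show ?thesis using fin by simp
  qed
  then show ?thesis
    unfolding p_def sum_divide_distrib[symmetric] E_sum_samples[OF fin, symmetric] by simp
qed

lemma p_total: "(\<Sum>R\<in>rects X Y. \<Sum>z\<in>Z. p R z) = 1"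
proof -
  have "(\<Sum>R\<in>rects X Y. \<Sum>z\<in>Z. p R z) = (\<Sum>z\<in>Z. \<Sum>R\<in>rects X Y. p R z)" by (rule sum.swap)
  also have "\<dots> = (\<Sum>z\<in>Z. 1 / card Z)"
    by (simp add: sum_p finite_rects[OF finite_X finite_Y] rect_in_rects)
  also have "\<dots> = 1" using finite_Z Z_nonempty by simp
  finally show ?thesis .
qed

lemma p_cover: "(\<Sum>R\<in>{R\<in>rects X Y. (x, y) \<in> R}. p R z) =
   measure_pmf.expectation samples (\<lambda>r. of_bool (x \<in> setA r z \<and> y \<in> setB r z)) / card Z"
  using finite_rects[OF finite_X finite_Y] rect_in_rects by (simp add: sum_p rect_def)

lemma eta_pos: "eta > 0"
  unfolding eta_def using rho_pos delta_pos finite_Z Z_nonempty by (simp add: card_gt_0_iff)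

lemma constraint_ii: "(\<Sum>z\<in>Z. \<Sum>R\<in>{R\<in>rects X Y. (x, y) \<in> R}. p R z) \<le> eta"
proof -
  have "(\<Sum>z\<in>Z. \<Sum>R\<in>{R\<in>rects X Y. (x, y) \<in> R}. p R z)
      = (\<Sum>z\<in>Z. measure_pmf.expectation samples (\<lambda>r. of_bool (x \<in> setA r z \<and> y \<in> setB r z))) / card Z"
    by (simp add: p_cover sum_divide_distrib)
  also have "\<dots> \<le> (rho + (rho * K)\<^sup>2) / card Z"
    by (intro divide_right_mono coverage_upper) auto
  also have "(rho * K)\<^sup>2 = rho * \<delta>"
    unfolding rho_def using K_pos by (simp add: power2_eq_square)
  finally show ?thesis by (simp add: eta_def algebra_simps)
qed

lemma sum_pmf_\<mu>: "(\<Sum>xy\<in>X \<times> Y. pmf \<mu> xy) = 1"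
  using sum_pmf_eq_1[of "X \<times> Y" \<mu>] finite_X finite_Y support by simp

lemma err_dist_as_sum: "err_dist S f \<pi> \<mu> = (\<Sum>xy\<in>X \<times> Y. pmf \<mu> xy * err_pt S f \<pi> (fst xy) (snd xy))"
  unfolding err_dist_def
  by (subst integral_measure_pmf[of "X \<times> Y"]) (use finite_X finite_Y support in \<open>auto simp: case_prod_beta\<close>)

lemma expected_bad: "(\<Sum>xy\<in>X \<times> Y. pmf \<mu> xy * bad (fst xy) (snd xy)) \<le> \<delta> / 2"
proof -
  have "(\<Sum>xy\<in>X \<times> Y. pmf \<mu> xy * bad (fst xy) (snd xy)) =
     (\<Sum>x\<in>X. \<Sum>y\<in>Y. \<Sum>t\<in>L. pmf \<mu> (x, y) * qA \<pi> t x * qB \<pi> t y *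
        of_bool (\<not> typical X Y \<mu> \<pi> (2 powr k) t x y))"
    by (simp add: sum.cartesian_product' bad_def K_def sum_distrib_left mult_ac)
  also have "\<dots> \<le> (IC \<pi> \<mu> + 4) / k" by (rule atypical_mass_bound[OF finite_X finite_Y support k_pos])
  also have "\<dots> \<le> \<delta> / 2" by (rule IC_small)
  finally show ?thesis .
qed

text \<open>The averaged correct coverage loses \<open>\<rho> \<epsilon>\<close> to errors, \<open>\<rho> \<delta> / 2\<close> to atypical
  transcripts, and \<open>\<rho> \<delta> / 2 + \<rho>\<^sup>2 \<le> 3 \<rho> \<delta> / 2\<close> to rounding and collisions.\<close>
lemma expected_cover_lower:
  "(\<Sum>xy\<in>X \<times> Y. pmf \<mu> xy * measure_pmf.expectation samples (\<lambda>r. cover r (fst xy) (snd xy))) \<ge> rho * (1 - \<epsilon> - 2 * \<delta>)"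
proof -
  define c where "c = 2 * real (card L) / n + rho\<^sup>2"
  have "pmf \<mu> xy * measure_pmf.expectation samples (\<lambda>r. cover r (fst xy) (snd xy))
      \<ge> pmf \<mu> xy * (rho * (1 - err_pt S f \<pi> (fst xy) (snd xy) - bad (fst xy) (snd xy)) - c)" for xy
  proof (cases "pmf \<mu> xy > 0")
    case True
    then show ?thesis
      using coverage_lower[of "fst xy" "snd xy"] by (intro mult_left_mono) (auto simp: c_def)
  next
    case False
    then have "pmf \<mu> xy = 0" using pmf_nonneg[of \<mu> xy] by linarith
    then show ?thesis by simp
  qed
  then have "(\<Sum>xy\<in>X \<times> Y. pmf \<mu> xy * measure_pmf.expectation samples (\<lambda>r. cover r (fst xy) (snd xy)))
      \<ge> (\<Sum>xy\<in>X \<times> Y. pmf \<mu> xy * (rho * (1 - err_pt S f \<pi> (fst xy) (snd xy) - bad (fst xy) (snd xy)) - c))"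
    by (intro sum_mono)
  also have "(\<Sum>xy\<in>X \<times> Y. pmf \<mu> xy * (rho * (1 - err_pt S f \<pi> (fst xy) (snd xy) - bad (fst xy) (snd xy)) - c))
      = rho * (\<Sum>xy\<in>X \<times> Y. pmf \<mu> xy) - rho * (\<Sum>xy\<in>X \<times> Y. pmf \<mu> xy * err_pt S f \<pi> (fst xy) (snd xy))
        - rho * (\<Sum>xy\<in>X \<times> Y. pmf \<mu> xy * bad (fst xy) (snd xy)) - c * (\<Sum>xy\<in>X \<times> Y. pmf \<mu> xy)"
    by (simp add: algebra_simps sum_subtractf sum.distrib sum_distrib_left sum_distrib_right)
  also have "\<dots> = rho - rho * err_dist S f \<pi> \<mu> - rho * (\<Sum>xy\<in>X \<times> Y. pmf \<mu> xy * bad (fst xy) (snd xy)) - c"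
    by (simp add: sum_pmf_\<mu> err_dist_as_sum)
  finally have lower: "rho - rho * err_dist S f \<pi> \<mu> - rho * (\<Sum>xy\<in>X \<times> Y. pmf \<mu> xy * bad (fst xy) (snd xy)) - c
      \<le> (\<Sum>xy\<in>X \<times> Y. pmf \<mu> xy * measure_pmf.expectation samples (\<lambda>r. cover r (fst xy) (snd xy)))" .
  have "rho * err_dist S f \<pi> \<mu> \<le> rho * \<epsilon>" using error rho_pos by (intro mult_left_mono) auto
  moreover have "rho * (\<Sum>xy\<in>X \<times> Y. pmf \<mu> xy * bad (fst xy) (snd xy)) \<le> rho * (\<delta> / 2)"
    using expected_bad rho_pos by (intro mult_left_mono) auto
  moreover have "2 * real (card L) / n \<le> rho * \<delta> / 2"
  proof -
    have "4 * real (card L) \<le> real n * rho * \<delta>" using n_large by (simp add: rho_def K_def mult_ac)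
    then show ?thesis using n_pos by (simp add: field_simps)
  qed
  moreover have "rho\<^sup>2 \<le> rho * \<delta>" using rho_le_delta rho_pos by (simp add: power2_eq_square)
  ultimately have "rho - rho * \<epsilon> - 2 * (rho * \<delta>)
      \<le> (\<Sum>xy\<in>X \<times> Y. pmf \<mu> xy * measure_pmf.expectation samples (\<lambda>r. cover r (fst xy) (snd xy)))"
    using lower unfolding c_def by linarith
  then show ?thesis by (simp add: algebra_simps)
qed

lemma constraint_i:
  "(\<Sum>xy\<in>S. pmf \<mu> xy * (\<Sum>R\<in>{R\<in>rects X Y. xy \<in> R}. p R (f (fst xy) (snd xy))))
     + (\<Sum>xy\<in>(X \<times> Y) - S. pmf \<mu> xy * (\<Sum>z\<in>Z. \<Sum>R\<in>{R\<in>rects X Y. xy \<in> R}. p R z))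
   \<ge> (1 - (\<epsilon> + 3 * \<delta>)) * eta"
proof -
  define C where "C xy = pmf \<mu> xy * measure_pmf.expectation samples (\<lambda>r. cover r (fst xy) (snd xy)) / card Z" for xy
  have "(\<Sum>xy\<in>S. pmf \<mu> xy * (\<Sum>R\<in>{R\<in>rects X Y. xy \<in> R}. p R (f (fst xy) (snd xy)))) = (\<Sum>xy\<in>S. C xy)"
    by (intro sum.cong refl) (auto simp: p_cover C_def cover_def)
  moreover have "(\<Sum>xy\<in>(X \<times> Y) - S. pmf \<mu> xy * (\<Sum>z\<in>Z. \<Sum>R\<in>{R\<in>rects X Y. xy \<in> R}. p R z)) = (\<Sum>xy\<in>(X \<times> Y) - S. C xy)"
    by (intro sum.cong refl)
       (auto simp: p_cover C_def cover_def sum_divide_distrib[symmetric] E_sum_samples[OF finite_Z])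
  moreover have "(\<Sum>xy\<in>X \<times> Y. C xy) = (\<Sum>xy\<in>(X \<times> Y) - S. C xy) + (\<Sum>xy\<in>S. C xy)"
    using finite_X finite_Y by (intro sum.subset_diff[OF S_subset]) simp
  moreover have "(1 - (\<epsilon> + 3 * \<delta>)) * (1 + \<delta>) \<le> 1 - \<epsilon> - 2 * \<delta>"
    using delta_pos eps_nonneg by (simp add: algebra_simps)
  then have "(1 - (\<epsilon> + 3 * \<delta>)) * eta \<le> rho * (1 - \<epsilon> - 2 * \<delta>) / card Z"
    unfolding eta_def using rho_pos by (simp add: divide_right_mono mult.left_commute mult_left_mono)
  moreover have "rho * (1 - \<epsilon> - 2 * \<delta>) / card Z \<le> (\<Sum>xy\<in>X \<times> Y. C xy)"
    unfolding C_def sum_divide_distrib[symmetric] by (intro divide_right_mono expected_cover_lower) auto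
  ultimately show ?thesis by linarith
qed

theorem feasible: "prt_feasible X Y Z S f \<mu> (\<epsilon> + 3 * \<delta>) eta p"
  unfolding prt_feasible_def using eta_pos p_nonneg constraint_i constraint_ii p_total by auto

lemma inverse_eta_le: "1 / eta \<le> card Z * 2 powr (2 * k) / \<delta>"
proof -
  have card_Z: "real (card Z) > 0" using finite_Z Z_nonempty by (simp add: card_gt_0_iff)
  have "1 / eta = card Z * K\<^sup>2 / (\<delta> * (1 + \<delta>))"
    unfolding eta_def rho_def using K_pos delta_pos card_Z by (simp add: field_simps)
  also have "\<dots> \<le> card Z * K\<^sup>2 / \<delta>"
    using card_Z delta_pos K_pos by (intro divide_left_mono) (auto intro!: mult_pos_pos)
  also have "K\<^sup>2 = 2 powr (2 * k)"
    unfolding K_def by (simp add: powr_realpow[symmetric] powr_powr power2_eq_square powr_add[symmetric])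
  finally show ?thesis .
qed

end

section \<open>The relaxed partition bound of a single protocol\<close>

lemma prt_mu_feasible_bounds:
  assumes "prt_feasible X Y Z S f \<mu> \<epsilon> \<eta> p"
  shows "prt_mu X Y Z S f \<mu> \<epsilon> \<le> 1 / \<eta>" and "prt_mu X Y Z S f \<mu> \<epsilon> \<ge> 0"
proof -
  define V where "V = {1 / \<eta> | \<eta> p. prt_feasible X Y Z S f \<mu> \<epsilon> \<eta> p}"
  have "1 / \<eta> \<in> V" unfolding V_def using assms by blast
  moreover have nonneg: "v \<ge> 0" if "v \<in> V" for v using that unfolding V_def prt_feasible_def by auto
  ultimately show "prt_mu X Y Z S f \<mu> \<epsilon> \<le> 1 / \<eta>" "prt_mu X Y Z S f \<mu> \<epsilon> \<ge> 0"
    unfolding prt_mu_def V_def[symmetric] by (auto intro!: cInf_lower cInf_greatest bdd_belowI[where m = 0])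
qed

text \<open>Choosing \<open>k = 2 (IC + 4) / \<delta>\<close> and \<open>n\<close> large enough in the compression construction.\<close>
theorem prt_mu_bound:
  fixes \<pi> :: "('x, 'y, 'z) proto"
  assumes fin: "finite X" "finite Y" "finite Z" and Z_nonempty: "Z \<noteq> {}"
    and S: "S \<subseteq> X \<times> Y" "\<And>x y. (x, y) \<in> S \<Longrightarrow> f x y \<in> Z"
    and support: "set_pmf \<mu> \<subseteq> X \<times> Y" and outputs: "outputs \<pi> \<subseteq> Z"
    and error: "err_dist S f \<pi> \<mu> \<le> \<epsilon>" and eps: "\<epsilon> \<ge> 0" and delta: "\<delta> > 0" "\<delta> < 1/2"
  shows "prt_mu X Y Z S f \<mu> (\<epsilon> + 3 * \<delta>) \<le> real (card Z) * 2 powr (4 * (IC \<pi> \<mu> + 4) / \<delta>) / \<delta>"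
    and "prt_mu X Y Z S f \<mu> (\<epsilon> + 3 * \<delta>) \<ge> 0"
proof -
  define k where "k = 2 * (IC \<pi> \<mu> + 4) / \<delta>"
  have IC: "IC \<pi> \<mu> \<ge> 0" by (rule IC_nonneg[OF fin(1,2) support])
  then have k_pos: "k > 0" unfolding k_def using delta by simp
  have IC_small: "(IC \<pi> \<mu> + 4) / k \<le> \<delta> / 2" unfolding k_def using IC delta by (simp add: field_simps)
  define n where "n = nat \<lceil>4 * real (card (leaves \<pi>)) / ((\<delta> / (2 powr k)\<^sup>2) * \<delta>)\<rceil> + 1"
  have "4 * real (card (leaves \<pi>)) / ((\<delta> / (2 powr k)\<^sup>2) * \<delta>) \<le> real n" unfolding n_def by linarith
  then have n_large: "4 * real (card (leaves \<pi>)) \<le> real n * (\<delta> / (2 powr k)\<^sup>2) * \<delta>"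
    using delta by (simp add: field_simps)
  interpret compression X Y Z S f \<mu> \<pi> \<epsilon> \<delta> k n
    by unfold_locales (use assms k_pos IC_small n_large in \<open>auto simp: n_def\<close>)
  note bounds = prt_mu_feasible_bounds[OF feasible]
  show "prt_mu X Y Z S f \<mu> (\<epsilon> + 3 * \<delta>) \<ge> 0" by (rule bounds(2))
  have "2 * k = 4 * (IC \<pi> \<mu> + 4) / \<delta>" unfolding k_def by simp
  then show "prt_mu X Y Z S f \<mu> (\<epsilon> + 3 * \<delta>) \<le> real (card Z) * 2 powr (4 * (IC \<pi> \<mu> + 4) / \<delta>) / \<delta>"
    using bounds(1) inverse_eta_le by simp
qed

section \<open>A protocol with zero error\<close>

text \<open>It witnesses that the
  infimum defining \<open>IC_mu\<close> ranges over a non-empty set, and since its number of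
  transcripts does not depend on \<open>\<mu>\<close> it bounds \<open>IC_mu\<close> uniformly in \<open>\<mu>\<close>.\<close>

primrec ask_alice :: "'x list \<Rightarrow> ('x \<Rightarrow> ('x, 'y, 'z) proto) \<Rightarrow> 'z \<Rightarrow> ('x, 'y, 'z) proto" where
  "ask_alice [] k z0 = Out z0"
| "ask_alice (v # vs) k z0 = AMsg (\<lambda>x. return_pmf (x = v)) (\<lambda>b. if b then k v else ask_alice vs k z0)"

primrec ask_bob :: "'y list \<Rightarrow> ('y \<Rightarrow> ('x, 'y, 'z) proto) \<Rightarrow> 'z \<Rightarrow> ('x, 'y, 'z) proto" where
  "ask_bob [] k z0 = Out z0"
| "ask_bob (w # ws) k z0 = BMsg (\<lambda>y. return_pmf (y = w)) (\<lambda>b. if b then k w else ask_bob ws k z0)"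

lemma map_snd_prepend: "map_pmf snd (map_pmf (\<lambda>(t, z). (b # t, z)) R) = map_pmf snd R"
  by (simp add: pmf.map_comp o_def case_prod_beta)

lemma output_ask_alice:
  "x \<in> set xs \<Longrightarrow> map_pmf snd (run (ask_alice xs k z0) x y) = map_pmf snd (run (k x) x y)"
  by (induction xs) (auto simp: bind_return_pmf map_snd_prepend)

lemma output_ask_bob:
  "y \<in> set ys \<Longrightarrow> map_pmf snd (run (ask_bob ys k z0) x y) = map_pmf snd (run (k y) x y)"
  by (induction ys) (auto simp: bind_return_pmf map_snd_prepend)

lemma outputs_ask_alice:
  assumes "\<And>v. outputs (k v) \<subseteq> Z" "z0 \<in> Z"
  shows "outputs (ask_alice xs k z0) \<subseteq> Z"
proof (induction xs)
  case (Cons v vs)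
  then show ?case using assms(1)[of v] by (auto split: if_splits)
qed (use assms in simp)

lemma outputs_ask_bob:
  assumes "\<And>w. outputs (k w) \<subseteq> Z" "z0 \<in> Z"
  shows "outputs (ask_bob ys k z0) \<subseteq> Z"
proof (induction ys)
  case (Cons w ws)
  then show ?case using assms(1)[of w] by (auto split: if_splits)
qed (use assms in simp)

definition reveal_protocol ::
    "'x::linorder set \<Rightarrow> 'y::linorder set \<Rightarrow> ('x \<times> 'y) set \<Rightarrow> ('x \<Rightarrow> 'y \<Rightarrow> 'z) \<Rightarrow> 'z \<Rightarrow> ('x, 'y, 'z) proto" where
  "reveal_protocol X Y S f z0 = ask_alice (sorted_list_of_set X)
     (\<lambda>v. ask_bob (sorted_list_of_set Y) (\<lambda>w. Out (if (v, w) \<in> S then f v w else z0)) z0) z0"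

lemma reveal_protocol_outputs:
  "z0 \<in> Z \<Longrightarrow> (\<And>x y. (x, y) \<in> S \<Longrightarrow> f x y \<in> Z) \<Longrightarrow> outputs (reveal_protocol X Y S f z0) \<subseteq> Z"
  unfolding reveal_protocol_def by (intro outputs_ask_alice outputs_ask_bob) auto

lemma reveal_protocol_err:
  assumes fin: "finite X" "finite Y" and supp: "set_pmf \<mu> \<subseteq> X \<times> Y"
  shows "err_dist S f (reveal_protocol X Y S f z0) \<mu> = 0"
proof -
  have "err_pt S f (reveal_protocol X Y S f z0) x y = 0" if "x \<in> X" "y \<in> Y" for x y
  proof -
    have "map_pmf snd (run (reveal_protocol X Y S f z0) x y) = return_pmf (if (x, y) \<in> S then f x y else z0)"
      unfolding reveal_protocol_def using fin that by (simp add: output_ask_alice output_ask_bob)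
    then have "measure_pmf.prob (map_pmf snd (run (reveal_protocol X Y S f z0) x y)) {z. z \<noteq> f x y} = 0"
      if "(x, y) \<in> S" using that by simp
    then show ?thesis by (simp add: err_pt_def vimage_def)
  qed
  then show ?thesis unfolding err_dist_def
    by (subst integral_measure_pmf[of "X \<times> Y"]) (use fin supp in \<open>auto intro!: sum.neutral\<close>)
qed

section \<open>Information complexity against the relaxed partition bound\<close>

text \<open>The infimum and supremum in \<open>IC_mu\<close> and \<open>IC_D\<close> are taken in the conditionally
  complete lattice of reals, so we first establish the needed non-emptiness and
  boundedness: information costs are non-negative, and the protocol revealing both
  inputs is always admissible and has a number of transcripts independent of \<open>\<mu>\<close>.\<close>

lemma IC_mu_le_IC:
  assumes "finite X" "finite Y" "set_pmf \<mu> \<subseteq> X \<times> Y" "outputs \<pi> \<subseteq> Z" "err_dist S f \<pi> \<mu> \<le> \<epsilon>"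
  shows "IC_mu Z S f \<mu> \<epsilon> \<le> IC \<pi> \<mu>"
proof -
  have "bdd_below ((\<lambda>\<pi>. IC \<pi> \<mu>) ` {\<pi>. outputs \<pi> \<subseteq> Z \<and> err_dist S f \<pi> \<mu> \<le> \<epsilon>})"
    using IC_nonneg[OF assms(1-3)] by (intro bdd_belowI[where m = 0]) auto
  then show ?thesis unfolding IC_mu_def using assms(4,5) by (intro cINF_lower) auto
qed

lemma IC_mu_greatest:
  fixes X :: "'x::linorder set" and Y :: "'y::linorder set"
  assumes fin: "finite X" "finite Y" and z0: "z0 \<in> Z" and S: "\<And>x y. (x, y) \<in> S \<Longrightarrow> f x y \<in> Z"
    and supp: "set_pmf \<mu> \<subseteq> X \<times> Y" and eps: "\<epsilon> \<ge> 0"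
    and lower: "\<And>\<pi>. outputs \<pi> \<subseteq> Z \<Longrightarrow> err_dist S f \<pi> \<mu> \<le> \<epsilon> \<Longrightarrow> \<phi> \<le> IC \<pi> \<mu>"
  shows "\<phi> \<le> IC_mu Z S f \<mu> \<epsilon>"
proof -
  have "outputs (reveal_protocol X Y S f z0) \<subseteq> Z" using z0 S by (rule reveal_protocol_outputs)
  then have "reveal_protocol X Y S f z0 \<in> {\<pi>. outputs \<pi> \<subseteq> Z \<and> err_dist S f \<pi> \<mu> \<le> \<epsilon>}"
    using reveal_protocol_err[OF fin supp, of S f z0] eps by simp
  then show ?thesis unfolding IC_mu_def using lower by (intro cINF_greatest) auto
qed

lemma IC_mu_le_IC_D:
  fixes X :: "'x::linorder set" and Y :: "'y::linorder set"
  assumes fin: "finite X" "finite Y" and z0: "z0 \<in> Z" and S: "\<And>x y. (x, y) \<in> S \<Longrightarrow> f x y \<in> Z"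
    and supp: "set_pmf \<mu> \<subseteq> X \<times> Y" and eps: "\<epsilon> \<ge> 0"
  shows "IC_mu Z S f \<mu> \<epsilon> \<le> IC_D X Y Z S f \<epsilon>"
proof -
  define \<pi>0 where "\<pi>0 = reveal_protocol X Y S f z0"
  have outputs: "outputs \<pi>0 \<subseteq> Z" unfolding \<pi>0_def using z0 S by (rule reveal_protocol_outputs)
  have "IC_mu Z S f \<mu>' \<epsilon> \<le> 2 * log 2 (card (leaves \<pi>0))" if "set_pmf \<mu>' \<subseteq> X \<times> Y" for \<mu>'
  proof -
    have "err_dist S f \<pi>0 \<mu>' \<le> \<epsilon>" unfolding \<pi>0_def using reveal_protocol_err[OF fin that, of S f z0] eps by simp
    from IC_mu_le_IC[OF fin that outputs this] show ?thesis
      using IC_le_log_leaves[OF fin that, of \<pi>0] by linarith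
  qed
  then show ?thesis
    unfolding IC_D_def using supp by (intro cSUP_upper) (auto simp: bdd_above_def)
qed

lemma IC_D_nonneg:
  fixes X :: "'x::linorder set" and Y :: "'y::linorder set"
  assumes fin: "finite X" "finite Y" and ne: "X \<noteq> {}" "Y \<noteq> {}" and z0: "z0 \<in> Z"
    and S: "\<And>x y. (x, y) \<in> S \<Longrightarrow> f x y \<in> Z" and eps: "\<epsilon> \<ge> 0"
  shows "IC_D X Y Z S f \<epsilon> \<ge> 0"
proof -
  obtain x0 y0 where xy0: "x0 \<in> X" "y0 \<in> Y" using ne by blast
  then have supp: "set_pmf (return_pmf (x0, y0)) \<subseteq> X \<times> Y" by simp
  have "0 \<le> IC_mu Z S f (return_pmf (x0, y0)) \<epsilon>"
    using IC_nonneg[OF fin supp] by (intro IC_mu_greatest[OF fin z0 S supp eps])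
  also have "\<dots> \<le> IC_D X Y Z S f \<epsilon>" by (rule IC_mu_le_IC_D[OF fin z0 S supp eps])
  finally show ?thesis .
qed

lemma powr_bound_iff_log_bound:
  assumes "c > 0" "\<delta> > 0" "P > 0"
  shows "P \<le> c * 2 powr (4 * (I + 4) / \<delta>) / \<delta> \<longleftrightarrow> \<delta> / 4 * log 2 (P * \<delta> / c) - 4 \<le> I"
proof -
  have "P \<le> c * 2 powr (4 * (I + 4) / \<delta>) / \<delta> \<longleftrightarrow> P * \<delta> / c \<le> 2 powr (4 * (I + 4) / \<delta>)"
    using assms by (simp add: field_simps)
  also have "\<dots> \<longleftrightarrow> log 2 (P * \<delta> / c) \<le> 4 * (I + 4) / \<delta>"
    using assms by (simp add: log_le_iff)
  also have "\<dots> \<longleftrightarrow> \<delta> / 4 * log 2 (P * \<delta> / c) - 4 \<le> I"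
    using assms by (simp add: field_simps)
  finally show ?thesis .
qed

lemma prt_mu_le_IC_D:
  fixes X :: "'x::linorder set" and Y :: "'y::linorder set"
  assumes fin: "finite X" "finite Y" "finite Z" and Z: "Z \<noteq> {}"
    and S: "S \<subseteq> X \<times> Y" "\<And>x y. (x, y) \<in> S \<Longrightarrow> f x y \<in> Z"
    and supp: "set_pmf \<mu> \<subseteq> X \<times> Y" and eps: "\<epsilon> \<ge> 0" and delta: "0 < \<delta>" "\<delta> < 1/2"
  shows "prt_mu X Y Z S f \<mu> (\<epsilon> + 3 * \<delta>) \<le> card Z * 2 powr (4 * (IC_D X Y Z S f \<epsilon> + 4) / \<delta>) / \<delta>"
proof (cases "prt_mu X Y Z S f \<mu> (\<epsilon> + 3 * \<delta>) > 0")
  case True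
  obtain z0 where z0: "z0 \<in> Z" using Z by blast
  have card_Z: "real (card Z) > 0" using fin(3) Z by (simp add: card_gt_0_iff)
  note iff = powr_bound_iff_log_bound[OF card_Z delta(1) True]
  have "\<delta> / 4 * log 2 (prt_mu X Y Z S f \<mu> (\<epsilon> + 3 * \<delta>) * \<delta> / card Z) - 4 \<le> IC_mu Z S f \<mu> \<epsilon>"
  proof (rule IC_mu_greatest[OF fin(1,2) z0 S(2) supp eps])
    fix \<pi>
    assume "outputs \<pi> \<subseteq> Z" "err_dist S f \<pi> \<mu> \<le> \<epsilon>"
    from prt_mu_bound(1)[OF fin Z S supp this eps delta]
    show "\<delta> / 4 * log 2 (prt_mu X Y Z S f \<mu> (\<epsilon> + 3 * \<delta>) * \<delta> / card Z) - 4 \<le> IC \<pi> \<mu>"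
      using iff by simp
  qed
  also have "\<dots> \<le> IC_D X Y Z S f \<epsilon>" by (rule IC_mu_le_IC_D[OF fin(1,2) z0 S(2) supp eps])
  finally show ?thesis using iff by blast
next
  case False
  moreover have "0 \<le> card Z * 2 powr (4 * (IC_D X Y Z S f \<epsilon> + 4) / \<delta>) / \<delta>" using delta by simp
  ultimately show ?thesis by linarith
qed

lemma prt_le_IC_D:
  fixes X :: "'x::linorder set" and Y :: "'y::linorder set"
  assumes fin: "finite X" "finite Y" "finite Z" and ne: "X \<noteq> {}" "Y \<noteq> {}" "Z \<noteq> {}"
    and S: "S \<subseteq> X \<times> Y" "\<And>x y. (x, y) \<in> S \<Longrightarrow> f x y \<in> Z" and eps: "\<epsilon> \<ge> 0" and delta: "0 < \<delta>" "\<delta> < 1/2"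
  shows "prt X Y Z S f (\<epsilon> + 3 * \<delta>) \<le> card Z * 2 powr (4 * (IC_D X Y Z S f \<epsilon> + 4) / \<delta>) / \<delta>"
    and "prt X Y Z S f (\<epsilon> + 3 * \<delta>) \<ge> 0"
proof -
  obtain z0 where z0: "z0 \<in> Z" using ne by blast
  have outputs: "outputs (reveal_protocol X Y S f z0) \<subseteq> Z" using z0 S(2) by (rule reveal_protocol_outputs)
  have prt_mu_nonneg: "prt_mu X Y Z S f \<mu> (\<epsilon> + 3 * \<delta>) \<ge> 0" if supp: "set_pmf \<mu> \<subseteq> X \<times> Y" for \<mu>
  proof -
    have "err_dist S f (reveal_protocol X Y S f z0) \<mu> \<le> \<epsilon>"
      using reveal_protocol_err[OF fin(1,2) supp, of S f z0] eps by linarith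
    from prt_mu_bound(2)[OF fin ne(3) S supp outputs this eps delta] show ?thesis .
  qed
  obtain x0 y0 where "x0 \<in> X" "y0 \<in> Y" using ne by blast
  then have supp0: "set_pmf (return_pmf (x0, y0)) \<subseteq> X \<times> Y" by simp
  have bounded: "prt_mu X Y Z S f \<mu> (\<epsilon> + 3 * \<delta>) \<le> card Z * 2 powr (4 * (IC_D X Y Z S f \<epsilon> + 4) / \<delta>) / \<delta>"
    if "set_pmf \<mu> \<subseteq> X \<times> Y" for \<mu>
    by (rule prt_mu_le_IC_D[OF fin ne(3) S that eps delta])
  show "prt X Y Z S f (\<epsilon> + 3 * \<delta>) \<le> card Z * 2 powr (4 * (IC_D X Y Z S f \<epsilon> + 4) / \<delta>) / \<delta>"
  proof -
    have "{\<mu>. set_pmf \<mu> \<subseteq> X \<times> Y} \<noteq> {}" using supp0 by blast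
    then show ?thesis unfolding prt_def using bounded by (intro cSUP_least) auto
  qed
  have "prt_mu X Y Z S f (return_pmf (x0, y0)) (\<epsilon> + 3 * \<delta>) \<le> prt X Y Z S f (\<epsilon> + 3 * \<delta>)"
    unfolding prt_def using supp0 bounded by (intro cSUP_upper bdd_aboveI2) auto
  then show "prt X Y Z S f (\<epsilon> + 3 * \<delta>) \<ge> 0" using prt_mu_nonneg[OF supp0] by linarith
qed

lemma neg_log2_le: assumes "0 < \<delta>" "\<delta> < 1" shows "- log 2 \<delta> \<le> 2 / \<delta>"
proof -
  have "- ln \<delta> \<le> 1 / \<delta>" using ln_le_minus_one[of "1 / \<delta>"] assms by (simp add: ln_div)
  then have "- ln \<delta> / ln 2 \<le> (1 / \<delta>) / ln 2" by (intro divide_right_mono) auto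
  then have "- log 2 \<delta> \<le> (1 / \<delta>) / ln 2" by (simp add: log_def)
  also have "\<dots> \<le> (1 / \<delta>) / (2 / 3)" using ln2_ge_two_thirds assms by (intro divide_left_mono) auto
  also have "\<dots> \<le> 2 / \<delta>" using assms by (simp add: field_simps)
  finally show ?thesis .
qed

lemma final_estimate:
  assumes D: "D \<ge> 0" and delta: "0 < \<delta>" "\<delta> < 1/2" and c: "c \<ge> 1" and P: "0 \<le> P"
    and bound: "P \<le> c * 2 powr (4 * (D + 4) / \<delta>) / \<delta>"
  shows "\<delta>\<^sup>2 / 18 * (log 2 P - log 2 c) - \<delta> \<le> D"
proof (cases "P = 0")
  case False
  then have "log 2 P \<le> log 2 (c * 2 powr (4 * (D + 4) / \<delta>) / \<delta>)"
    using P bound c delta by simp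
  also have "\<dots> = log 2 c + 4 * (D + 4) / \<delta> - log 2 \<delta>"
    using c delta by (simp add: log_mult log_divide)
  finally have "log 2 P - log 2 c \<le> (4 * D + 18) / \<delta>"
    using neg_log2_le[of \<delta>] delta by (simp add: field_simps)
  then have "\<delta>\<^sup>2 / 18 * (log 2 P - log 2 c) \<le> \<delta>\<^sup>2 / 18 * ((4 * D + 18) / \<delta>)"
    by (intro mult_left_mono) auto
  also have "\<dots> = \<delta> * (4 * D) / 18 + \<delta>" using delta by (simp add: field_simps power2_eq_square)
  also have "\<delta> * (4 * D) \<le> 4 * D" using delta D by (simp add: mult_left_le_one_le)
  then have "\<delta> * (4 * D) / 18 \<le> D" using D by linarith
  finally show ?thesis by simp
next
  case True
  have "log 2 c \<ge> 0" using c by simp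
  moreover have "log 2 P = 0" using True by (simp add: log_def)
  ultimately have "\<delta>\<^sup>2 / 18 * (log 2 P - log 2 c) \<le> 0" by (simp add: mult_nonneg_nonpos)
  then show ?thesis using D delta by linarith
qed

theorem mainTheorem2:
  shows "\<exists>C::real. C > 0 \<and>
    (\<forall>(X::nat set) (Y::nat set) (Z::nat set) (S::(nat \<times> nat) set) (f::nat \<Rightarrow> nat \<Rightarrow> nat) (\<epsilon>::real) (\<delta>::real).
       finite X \<and> finite Y \<and> finite Z \<and> X \<noteq> {} \<and> Y \<noteq> {} \<and> Z \<noteq> {} \<and>
       S \<subseteq> X \<times> Y \<and> (\<forall>(x, y)\<in>S. f x y \<in> Z) \<and>
       0 < \<epsilon> \<and> \<epsilon> < 1/2 \<and> 0 < \<delta> \<and> \<delta> < 1/2 \<longrightarrow>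
       IC_D X Y Z S f \<epsilon> \<ge>
         \<delta>\<^sup>2 / C * (log 2 (prt X Y Z S f (\<epsilon> + 3 * \<delta>)) - log 2 (real (card Z))) - \<delta>)"
proof (intro exI[of _ 18] conjI allI impI)
  fix X Y Z :: "nat set" and S :: "(nat \<times> nat) set" and f :: "nat \<Rightarrow> nat \<Rightarrow> nat" and \<epsilon> \<delta> :: real
  assume "finite X \<and> finite Y \<and> finite Z \<and> X \<noteq> {} \<and> Y \<noteq> {} \<and> Z \<noteq> {} \<and>
       S \<subseteq> X \<times> Y \<and> (\<forall>(x, y)\<in>S. f x y \<in> Z) \<and> 0 < \<epsilon> \<and> \<epsilon> < 1/2 \<and> 0 < \<delta> \<and> \<delta> < 1/2"
  then have fin: "finite X" "finite Y" "finite Z" and ne: "X \<noteq> {}" "Y \<noteq> {}" "Z \<noteq> {}"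
    and S: "S \<subseteq> X \<times> Y" "\<And>x y. (x, y) \<in> S \<Longrightarrow> f x y \<in> Z"
    and eps: "\<epsilon> \<ge> 0" and delta: "0 < \<delta>" "\<delta> < 1/2" by auto
  obtain z0 where z0: "z0 \<in> Z" using ne by blast
  have card_Z: "real (card Z) \<ge> 1" using fin(3) ne(3) by (simp add: Suc_leI card_gt_0_iff)
  note prt_bounds = prt_le_IC_D[OF fin ne S eps delta]
  from final_estimate[OF IC_D_nonneg[OF fin(1,2) ne(1,2) z0 S(2) eps] delta card_Z prt_bounds(2,1)]
  show "\<delta>\<^sup>2 / 18 * (log 2 (prt X Y Z S f (\<epsilon> + 3 * \<delta>)) - log 2 (real (card Z))) - \<delta> \<le> IC_D X Y Z S f \<epsilon>" .
qed simp

end
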